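(* Let $\overline H_{\beta,q}\in(\widehat\Lambda^\hbar_N)^{[\le0]}$, $1\le\beta\le N$, $q\ge0$, be pairwise commuting quantum local functionals, $[\overline H_{\beta,q},\overline H_{\gamma,p}]=0$, with $\overline H_{1,0}=\int\frac12\eta_{\mu\nu}u^\mu u^\nu dx$. Suppose that $$\frac{\partial\overline H_{\beta,q}}{\partial u^1}=\begin{cases}\overline H_{\beta,q-1},&q\ge1,\\ \int\eta_{\beta\mu}u^\mu dx,&q=0.\end{cases}$$ Then the quantum differential polynomials $H_{\beta,q}:=\frac{\delta\overline H_{\beta,q+1}}{\delta u^1}$, $q\ge-1$, define a tau-structure for this quantum hierarchy.
   Context: Quantum differential polynomials $\widehat{\mathcal A}^\hbar_N$: formal power series in $\varepsilon,\hbar$ whose coefficients are polynomials in the formal variables $u^\alpha_k$ ($1\le\alpha\le N$, $k>0$) with coefficients in $\mathbb C[[u^1,\dots,u^N]]$ ($u^\alpha=u^\alpha_0$); grading $\deg u^\alpha_k=k$, $\deg\varepsilon=-1$, $\deg\hbar=-2$; superscript $[\le0]$ means sums of homogeneous terms of degree $\le0$. $\partial_x=\sum_ku^\alpha_{k+1}\partial/\partial u^\alpha_k$. Quantum local functionals $\widehat\Lambda^\hbar_N$: quotient of $\widehat{\mathcal A}^\hbar_N$ by power series in $\varepsilon,\hbar$ and by $\mathrm{Im}\,\partial_x$; $\int f\,dx$ denotes the class. $\frac{\delta\overline f}{\delta u^\mu}=\sum_i(-\partial_x)^i\frac{\partial f}{\partial u^\mu_i}$; $\frac{\partial}{\partial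 u^1}$ acts on local functionals since it commutes with $\partial_x$. $\eta$ is a nondegenerate symmetric $N\times N$ matrix, $\eta^{\alpha\beta}$ its inverse, repeated Greek indices are summed. Quantum commutator: via $u^\alpha_j=\sum_{k\in\mathbb Z}(ik)^jp^\alpha_ke^{ikx}$ a quantum differential polynomial becomes a Fourier series in $x$ with coefficients in $\mathbb C[p_{k>0}][[p_{k\le0},\hbar]][[\varepsilon]]$, and a local functional corresponds to the constant Fourier coefficient. Set $f\star g=f\exp\big(\sum_{k>0}i\hbar k\eta^{\alpha\beta}\overleftarrow{\partial_{p^\alpha_k}}\overrightarrow{\partial_{p^\beta_{-k}}}\big)g$ and $[f,g]=f\star g-g\star f$. Tau-structure: for a family of pairwise commuting $\overline H_{\beta,q}$ as in the claim, a tau-structure is a collection $H_{\beta,q}\in(\widehat{\mathcal A}^\hbar_N)^{[\le0]}$, $1\le\beta\le N$, $q\ge-1$, such that (1) $\int H_{\beta,-1}dx=\int\eta_{\beta\mu}u^\mu dx$; (2) $\int H_{\beta,q}dx=\overline H_{\beta,q}$ for $q\ge0$; (3) $[H_{\alpha,p-1},\overline H_{\beta,q}]=[H_{\beta,q-1},\overline H_{\alpha,p}]$ for all $\alpha,\beta$ and $p,q\ge0$. *)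

theory Defs
  imports Complex_Main "HOL-Library.Poly_Mapping"
begin

text \<open>
Indices alpha range over 1..N (natural numbers); u^alpha_k is the
variable (alpha,k).  A quantum differential polynomial is represented by its
coefficient function: monomial in the u-variables, exponent of epsilon,
exponent of hbar  to  complex coefficient.  Fourier images are represented as
coefficient functions on monomials in the variables p^alpha_k (k integer)
together with exponents of epsilon and hbar; the Fourier mode of a p-monomial
equals its total momentum, so a Fourier series is a single such function.
\<close>

type_synonym umon = "(nat \<times> nat) \<Rightarrow>\<^sub>0 nat"
type_synonym qdp = "umon \<Rightarrow> nat \<Rightarrow> nat \<Rightarrow> complex"
type_synonym pmon = "(nat \<times> int) \<Rightarrow>\<^sub>0 nat"
type_synonym pser = "pmon \<Rightarrow> nat \<Rightarrow> nat \<Rightarrow> complex"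

definition fsum :: "('a \<Rightarrow> complex) \<Rightarrow> complex" where
  "fsum g = sum g {x. g x \<noteq> 0}"

definition jet :: "umon \<Rightarrow> nat \<times> nat \<Rightarrow> nat" where
  "jet m = (\<lambda>(a,k). if 0 < k then Poly_Mapping.lookup m (a,k) else 0)"

definition jetdeg :: "umon \<Rightarrow> nat" where
  "jetdeg m = (\<Sum>x\<in>Poly_Mapping.keys m. snd x * Poly_Mapping.lookup m x)"

text \<open>Membership in the space of quantum differential polynomials:
only variables u^alpha_k with 1 <= alpha <= N occur, and for each power of
epsilon and hbar the coefficient is a polynomial in the u^alpha_k, k>0
(with coefficients power series in u^alpha_0).\<close>
definition qdp_valid :: "nat \<Rightarrow> qdp \<Rightarrow> bool" where
  "qdp_valid N f \<longleftrightarrow>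
     (\<forall>m e h. f m e h \<noteq> 0 \<longrightarrow> (\<forall>x\<in>Poly_Mapping.keys m. 1 \<le> fst x \<and> fst x \<le> N)) \<and>
     (\<forall>e h. finite {jet m | m. f m e h \<noteq> 0})"

text \<open>Degree <= 0: deg u_k = k, deg epsilon = -1, deg hbar = -2.\<close>
definition deg_le0 :: "qdp \<Rightarrow> bool" where
  "deg_le0 f \<longleftrightarrow> (\<forall>m e h. f m e h \<noteq> 0 \<longrightarrow> jetdeg m \<le> e + 2 * h)"

text \<open>partial_x = sum u^alpha_{k+1} d/du^alpha_k\<close>
definition dx :: "qdp \<Rightarrow> qdp" where
  "dx f = (\<lambda>m e h. \<Sum>x\<in>{(a,k). (a, Suc k) \<in> Poly_Mapping.keys m}.
      of_nat (Poly_Mapping.lookup m x + 1) *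
      f (m - Poly_Mapping.single (fst x, Suc (snd x)) 1 + Poly_Mapping.single x 1) e h)"

definition du :: "nat \<Rightarrow> nat \<Rightarrow> qdp \<Rightarrow> qdp" where
  "du a i f = (\<lambda>m e h. of_nat (Poly_Mapping.lookup m (a,i) + 1) * f (m + Poly_Mapping.single (a,i) 1) e h)"

text \<open>variational derivative delta/delta u^mu = sum_i (-partial_x)^i d/du^mu_i
(only i <= jet degree of the target monomial contribute)\<close>
definition vard :: "nat \<Rightarrow> qdp \<Rightarrow> qdp" where
  "vard mu f = (\<lambda>m e h. \<Sum>i\<le>jetdeg m. (-1) ^ i * (dx ^^ i) (du mu i f) m e h)"

text \<open>Equality of local functionals: int f dx = int g dx, i.e. f - g lies in
Im partial_x plus power series in epsilon, hbar.\<close>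
definition lf_eq :: "nat \<Rightarrow> qdp \<Rightarrow> qdp \<Rightarrow> bool" where
  "lf_eq N f g \<longleftrightarrow> (\<exists>k c. qdp_valid N k \<and> (\<forall>m e h. m \<noteq> 0 \<longrightarrow> c m e h = 0) \<and>
      (\<forall>m e h. f m e h - g m e h = dx k m e h + c m e h))"

definition lin_dens :: "nat \<Rightarrow> (nat \<Rightarrow> nat \<Rightarrow> complex) \<Rightarrow> nat \<Rightarrow> qdp" where
  "lin_dens N eta b = (\<lambda>m e h. if e = 0 \<and> h = 0 then
      (\<Sum>mu\<in>{1..N}. if m = Poly_Mapping.single (mu,0) 1 then eta b mu else 0) else 0)"

definition quad_dens :: "nat \<Rightarrow> (nat \<Rightarrow> nat \<Rightarrow> complex) \<Rightarrow> qdp" where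
  "quad_dens N eta = (\<lambda>m e h. if e = 0 \<and> h = 0 then
      (\<Sum>mu\<in>{1..N}. \<Sum>nu\<in>{1..N}.
         if m = Poly_Mapping.single (mu,0) 1 + Poly_Mapping.single (nu,0) 1
         then eta mu nu / 2 else 0) else 0)"

text \<open>Fourier image via u^alpha_j = sum_k (ik)^j p^alpha_k e^{ikx}.  The
coefficient of a p-monomial P is obtained by summing over u-monomials m and
distributions c(alpha,j,k) of the factors of m among the p^alpha_k.\<close>
definition pfact :: "('a \<Rightarrow>\<^sub>0 nat) \<Rightarrow> complex" where
  "pfact R = (\<Prod>x\<in>Poly_Mapping.keys R. fact (Poly_Mapping.lookup R x))"

definition fourier :: "qdp \<Rightarrow> pser" where
  "fourier f = (\<lambda>P e h. fsum (\<lambda>(m :: umon, c :: (nat \<times> nat \<times> int) \<Rightarrow>\<^sub>0 nat).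
      if (\<forall>a j. Poly_Mapping.lookup m (a,j) = (\<Sum>k\<in>{k. (a,j,k) \<in> Poly_Mapping.keys c}. Poly_Mapping.lookup c (a,j,k))) \<and>
         (\<forall>a k. Poly_Mapping.lookup P (a,k) = (\<Sum>j\<in>{j. (a,j,k) \<in> Poly_Mapping.keys c}. Poly_Mapping.lookup c (a,j,k)))
      then f m e h * pfact m / pfact c *
           (\<Prod>x\<in>Poly_Mapping.keys c. (case x of (a,j,k) \<Rightarrow> (\<i> * of_int k) ^ (j * Poly_Mapping.lookup c x)))
      else 0))"

definition momentum :: "pmon \<Rightarrow> int" where
  "momentum P = (\<Sum>x\<in>Poly_Mapping.keys P. snd x * int (Poly_Mapping.lookup P x))"

text \<open>local functional = constant Fourier coefficient = momentum-zero part\<close>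
definition zero_mode :: "pser \<Rightarrow> pser" where
  "zero_mode A = (\<lambda>P e h. if momentum P = 0 then A P e h else 0)"

text \<open>Star product
 f * g = f exp(sum_{k>0} i hbar k eta^{alpha beta} <-d/dp^alpha_k ->d/dp^beta_{-k}) g,
expanded: t(alpha,beta,k) counts the factors of each kind in the exponential,
a and b are the resulting multi-indices of differentiation.\<close>
definition star :: "nat \<Rightarrow> (nat \<Rightarrow> nat \<Rightarrow> complex) \<Rightarrow> pser \<Rightarrow> pser \<Rightarrow> pser" where
  "star N etainv A B = (\<lambda>P e h. fsum
     (\<lambda>(t :: (nat \<times> nat \<times> nat) \<Rightarrow>\<^sub>0 nat, a :: pmon, b :: pmon, Q1 :: pmon, Q2 :: pmon,
        e1 :: nat, h1 :: nat, h2 :: nat).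
      if (\<forall>x\<in>Poly_Mapping.keys t. case x of (al,be,k) \<Rightarrow> al \<in> {1..N} \<and> be \<in> {1..N} \<and> 0 < k) \<and>
         (\<forall>al k. Poly_Mapping.lookup a (al,k) =
             (if 0 < k then (\<Sum>be\<in>{1..N}. Poly_Mapping.lookup t (al,be,nat k)) else 0)) \<and>
         (\<forall>be k. Poly_Mapping.lookup b (be,k) =
             (if k < 0 then (\<Sum>al\<in>{1..N}. Poly_Mapping.lookup t (al,be,nat (-k))) else 0)) \<and>
         Q1 + Q2 = P \<and> e1 \<le> e \<and> h1 + h2 + (\<Sum>x\<in>Poly_Mapping.keys t. Poly_Mapping.lookup t x) = h
      then \<i> ^ (\<Sum>x\<in>Poly_Mapping.keys t. Poly_Mapping.lookup t x) *
           (\<Prod>x\<in>Poly_Mapping.keys t. (case x of (al,be,k) \<Rightarrow> (of_nat k * etainv al be) ^ Poly_Mapping.lookup t x)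
                            / fact (Poly_Mapping.lookup t x)) *
           (A (Q1 + a) e1 h1 * pfact (Q1 + a) / pfact Q1) *
           (B (Q2 + b) (e - e1) h2 * pfact (Q2 + b) / pfact Q2)
      else 0))"

definition qcomm :: "nat \<Rightarrow> (nat \<Rightarrow> nat \<Rightarrow> complex) \<Rightarrow> pser \<Rightarrow> pser \<Rightarrow> pser" where
  "qcomm N etainv A B = (\<lambda>P e h. star N etainv A B P e h - star N etainv B A P e h)"

definition tau_structure ::
  "nat \<Rightarrow> (nat \<Rightarrow> nat \<Rightarrow> complex) \<Rightarrow> (nat \<Rightarrow> nat \<Rightarrow> complex) \<Rightarrow>
   (nat \<Rightarrow> nat \<Rightarrow> qdp) \<Rightarrow> (nat \<Rightarrow> int \<Rightarrow> qdp) \<Rightarrow> bool" where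
  "tau_structure N eta etainv hb H \<longleftrightarrow>
     (\<forall>b\<in>{1..N}. \<forall>q\<ge>-1. qdp_valid N (H b q) \<and> deg_le0 (H b q)) \<and>
     (\<forall>b\<in>{1..N}. lf_eq N (H b (-1)) (lin_dens N eta b)) \<and>
     (\<forall>b\<in>{1..N}. \<forall>q::nat. lf_eq N (H b (int q)) (hb b q)) \<and>
     (\<forall>al\<in>{1..N}. \<forall>b\<in>{1..N}. \<forall>p q::nat.
        qcomm N etainv (fourier (H al (int p - 1))) (zero_mode (fourier (hb b q))) =
        qcomm N etainv (fourier (H b (int q - 1))) (zero_mode (fourier (hb al p))))"

end

theory Submission
  imports Defs
begin

text \<open>
  Apart from its i = 0 term, the variational derivative of f is a total x-derivative, so
  int (delta f / delta u^1) dx = int (df / du^1_0) dx. With the string equations this gives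
  conditions (1) and (2) of a tau-structure; delta / delta u^1 preserves validity and the degree bound.

  For (3) pass to Fourier images. There d_x is multiplication by i times the momentum, and
  u^mu_j = sum_k (ik)^j p^mu_k, so by the chain rule the coefficients of delta f / delta u^mu at
  momentum k are those of d/dp^mu_-k applied to the zero mode of the Fourier image of f.
  Derivatives in p commute with the exponential defining the star product, which is therefore a
  derivation for them; differentiating the commutation relations of the Hamiltonians yields (3).
\<close>

section \<open>Finitely supported sums and monomials\<close>

lemma fsum_eq_sum: "finite S \<Longrightarrow> {x. g x \<noteq> 0} \<subseteq> S \<Longrightarrow> fsum g = sum g S"
  unfolding fsum_def by (rule sum.mono_neutral_left) auto

lemma fsum_reindex:
  assumes "inj f" "{x. g x \<noteq> 0} \<subseteq> range f"
  shows "fsum (\<lambda>y. g (f y)) = fsum g"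
proof -
  have eq: "{y. g (f y) \<noteq> 0} = f -` {x. g x \<noteq> 0}" by auto
  have im: "f ` (f -` {x. g x \<noteq> 0}) = {x. g x \<noteq> 0}" using assms(2) by auto
  show ?thesis
  proof (cases "finite {x. g x \<noteq> 0}")
    case True
    then have "finite (f -` {x. g x \<noteq> 0})" using True assms(1) by (intro finite_vimageI)
    have inj: "inj_on f (f -` {x. g x \<noteq> 0})" using assms(1) by (simp add: inj_on_def inj_def)
    have "sum g {x. g x \<noteq> 0} = sum g (f ` (f -` {x. g x \<noteq> 0}))" by (simp only: im)
    also have "\<dots> = sum (g \<circ> f) (f -` {x. g x \<noteq> 0})" by (rule sum.reindex[OF inj])
    finally show ?thesis unfolding fsum_def eq by (simp add: comp_def)
  next
    case False
    then have "infinite (f -` {x. g x \<noteq> 0})" using im by (metis finite_imageI)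
    then show ?thesis using False unfolding fsum_def eq by simp
  qed
qed

lemma fsum_add:
  assumes "finite {x. g x \<noteq> 0}" "finite {x. h x \<noteq> 0}"
  shows "fsum (\<lambda>x. g x + h x) = fsum g + fsum h"
proof -
  let ?S = "{x. g x \<noteq> 0} \<union> {x. h x \<noteq> 0}"
  have "fsum (\<lambda>x. g x + h x) = sum (\<lambda>x. g x + h x) ?S"
    by (rule fsum_eq_sum) (use assms in auto)
  also have "\<dots> = sum g ?S + sum h ?S" by (simp add: sum.distrib)
  also have "sum g ?S = fsum g" by (rule fsum_eq_sum[symmetric]) (use assms in auto)
  also have "sum h ?S = fsum h" by (rule fsum_eq_sum[symmetric]) (use assms in auto)
  finally show ?thesis .
qed

lemma fsum_cmult: "fsum (\<lambda>x. c * g x) = c * fsum g"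
proof (cases "c = 0")
  case True then show ?thesis by (simp add: fsum_def)
next
  case False
  then have "{x. c * g x \<noteq> 0} = {x. g x \<noteq> 0}" by auto
  then show ?thesis unfolding fsum_def by (simp add: sum_distrib_left)
qed

lemma fsum_sum:
  assumes "finite I" "\<forall>i\<in>I. finite {x. g i x \<noteq> 0}"
  shows "fsum (\<lambda>x. \<Sum>i\<in>I. g i x) = (\<Sum>i\<in>I. fsum (g i))"
proof -
  let ?S = "\<Union>i\<in>I. {x. g i x \<noteq> 0}"
  have fS: "finite ?S" using assms by auto
  have "fsum (\<lambda>x. \<Sum>i\<in>I. g i x) = sum (\<lambda>x. \<Sum>i\<in>I. g i x) ?S"
  proof (rule fsum_eq_sum[OF fS])
    show "{x. (\<Sum>i\<in>I. g i x) \<noteq> 0} \<subseteq> ?S"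
    proof
      fix x assume "x \<in> {x. (\<Sum>i\<in>I. g i x) \<noteq> 0}"
      then obtain i where "i \<in> I" "g i x \<noteq> 0" by (metis (mono_tags, lifting) mem_Collect_eq sum.neutral)
      then show "x \<in> ?S" by auto
    qed
  qed
  also have "\<dots> = (\<Sum>i\<in>I. sum (g i) ?S)" by (rule sum.swap)
  also have "\<dots> = (\<Sum>i\<in>I. fsum (g i))"
    by (rule sum.cong[OF refl], rule fsum_eq_sum[symmetric, OF fS]) auto
  finally show ?thesis .
qed

lemma fsum_nested:
  assumes "finite {x. \<exists>y\<in>S x. g x y \<noteq> 0}" "\<And>x. finite (S x)"
  shows "fsum (\<lambda>x. \<Sum>y\<in>S x. g x y) = fsum (\<lambda>(x,y). if y \<in> S x then g x y else 0)"
proof -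
  let ?A = "{x. \<exists>y\<in>S x. g x y \<noteq> 0}"
  have "fsum (\<lambda>x. \<Sum>y\<in>S x. g x y) = (\<Sum>x\<in>?A. \<Sum>y\<in>S x. g x y)"
    by (rule fsum_eq_sum[OF assms(1)]) (auto elim: sum.not_neutral_contains_not_neutral)
  also have "\<dots> = (\<Sum>(x,y)\<in>Sigma ?A S. g x y)"
    by (rule sum.Sigma) (use assms in auto)
  also have "\<dots> = (\<Sum>(x,y)\<in>Sigma ?A S. if y \<in> S x then g x y else 0)"
    by (rule sum.cong) auto
  also have "\<dots> = fsum (\<lambda>(x,y). if y \<in> S x then g x y else 0)"
    by (rule fsum_eq_sum[symmetric]) (use assms in \<open>auto split: if_splits\<close>)
  finally show ?thesis .
qed

lemma lookup_add_single: "Poly_Mapping.lookup (c + Poly_Mapping.single y (1::nat)) x =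
   Poly_Mapping.lookup c x + (if x = y then 1 else 0)"
  by (simp add: lookup_add lookup_single when_def)

lemma keys_add_single: "Poly_Mapping.keys (c + Poly_Mapping.single y (1::nat)) = insert y (Poly_Mapping.keys c)"
  by (rule set_eqI, unfold insert_iff in_keys_iff lookup_add_single) auto

lemmas keys_add_single_Suc_0[simp] = keys_add_single[unfolded One_nat_def]

lemmas lookup_add_single_Suc_0[simp] = lookup_add_single[unfolded One_nat_def]

lemma prod_keys_superset:
  assumes "finite S" "Poly_Mapping.keys c \<subseteq> S" "\<And>x. h x 0 = 1"
  shows "(\<Prod>x\<in>Poly_Mapping.keys c. h x (Poly_Mapping.lookup c x)) = (\<Prod>x\<in>S. h x (Poly_Mapping.lookup c x))"
  by (rule prod.mono_neutral_left) (use assms in \<open>auto simp: in_keys_iff\<close>)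

lemma sum_keys_superset:
  assumes "finite S" "Poly_Mapping.keys c \<subseteq> S" "\<And>x. h x 0 = 0"
  shows "(\<Sum>x\<in>Poly_Mapping.keys c. h x (Poly_Mapping.lookup c x)) = (\<Sum>x\<in>S. h x (Poly_Mapping.lookup c x))"
  by (rule sum.mono_neutral_left) (use assms in \<open>auto simp: in_keys_iff\<close>)

lemma pfact_superset:
  assumes "finite S" "Poly_Mapping.keys R \<subseteq> S"
  shows "pfact R = (\<Prod>x\<in>S. fact (Poly_Mapping.lookup R x))"
  unfolding pfact_def by (rule prod_keys_superset[OF assms]) simp

lemma pfact_nonzero: "pfact R \<noteq> 0"
  unfolding pfact_def by (simp add: prod_zero_iff)

lemma pfact_add_single:
  "pfact (R + Poly_Mapping.single y (1::nat)) = of_nat (Poly_Mapping.lookup R y + 1) * pfact R"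
proof -
  let ?S = "insert y (Poly_Mapping.keys R)"
  let ?Q = "(\<Prod>x\<in>?S - {y}. fact (Poly_Mapping.lookup R x)) :: complex"
  let ?n = "Poly_Mapping.lookup R y"
  have f: "finite ?S" by simp
  have h1: "pfact (R + Poly_Mapping.single y 1) = fact (?n + 1) * ?Q"
  proof -
    have "pfact (R + Poly_Mapping.single y 1) = (\<Prod>x\<in>?S. fact (Poly_Mapping.lookup (R + Poly_Mapping.single y 1) x))"
      by (rule pfact_superset[OF f]) (simp add: keys_add_single)
    also have "\<dots> = fact (?n + 1) * ?Q"
      by (subst prod.remove[of _ y]) (auto simp: lookup_add_single intro!: prod.cong)
    finally show ?thesis .
  qed
  have h2: "pfact R = fact ?n * ?Q"
  proof -
    have "pfact R = (\<Prod>x\<in>?S. fact (Poly_Mapping.lookup R x) :: complex)" by (rule pfact_superset[OF f]) auto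
    also have "\<dots> = fact ?n * ?Q"
      by (rule prod.remove) auto
    finally show ?thesis .
  qed
  have h3: "(fact (?n + 1) :: complex) = of_nat (?n + 1) * fact ?n"
    by (simp only: Suc_eq_plus1[symmetric] fact_Suc)
  show ?thesis by (simp only: h1 h2 h3 mult.assoc)
qed

lemma prod_power_keys_superset:
  assumes "finite S" "Poly_Mapping.keys c \<subseteq> S"
  shows "(\<Prod>x\<in>Poly_Mapping.keys c. v x ^ Poly_Mapping.lookup c x) = (\<Prod>x\<in>S. v x ^ Poly_Mapping.lookup c x)"
  by (rule prod_keys_superset[OF assms]) simp

lemma prod_power_add_single:
  fixes v :: "'a \<Rightarrow> 'b::comm_monoid_mult"
  shows "(\<Prod>x\<in>Poly_Mapping.keys (c + Poly_Mapping.single y (1::nat)). v x ^ Poly_Mapping.lookup (c + Poly_Mapping.single y 1) x)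
     = v y * (\<Prod>x\<in>Poly_Mapping.keys c. v x ^ Poly_Mapping.lookup c x)"
proof -
  let ?S = "insert y (Poly_Mapping.keys c)"
  have f: "finite ?S" by simp
  have "(\<Prod>x\<in>Poly_Mapping.keys (c + Poly_Mapping.single y 1). v x ^ Poly_Mapping.lookup (c + Poly_Mapping.single y 1) x)
     = (\<Prod>x\<in>?S. v x ^ Poly_Mapping.lookup (c + Poly_Mapping.single y 1) x)"
    by (rule prod_power_keys_superset[OF f]) (simp add: keys_add_single)
  also have "\<dots> = (\<Prod>x\<in>?S. (if x = y then v y else 1) * v x ^ Poly_Mapping.lookup c x)"
    by (rule prod.cong) (auto simp: lookup_add_single)
  also have "\<dots> = v y * (\<Prod>x\<in>?S. v x ^ Poly_Mapping.lookup c x)"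
    by (simp add: prod.distrib prod.delta)
  also have "(\<Prod>x\<in>?S. v x ^ Poly_Mapping.lookup c x) = (\<Prod>x\<in>Poly_Mapping.keys c. v x ^ Poly_Mapping.lookup c x)"
    by (rule prod_power_keys_superset[symmetric]) auto
  finally show ?thesis .
qed

lemma momentum_superset:
  assumes "finite S" "Poly_Mapping.keys P \<subseteq> S"
  shows "momentum P = (\<Sum>x\<in>S. snd x * int (Poly_Mapping.lookup P x))"
  unfolding momentum_def by (rule sum_keys_superset[OF assms]) simp

lemma momentum_add: "momentum (P + Q) = momentum P + momentum Q"
proof -
  let ?S = "Poly_Mapping.keys P \<union> Poly_Mapping.keys Q"
  have f: "finite ?S" by simp
  have "momentum (P + Q) = (\<Sum>x\<in>?S. snd x * int (Poly_Mapping.lookup (P+Q) x))"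
    by (rule momentum_superset[OF f]) (rule keys_add)
  also have "\<dots> = (\<Sum>x\<in>?S. snd x * int (Poly_Mapping.lookup P x)) + (\<Sum>x\<in>?S. snd x * int (Poly_Mapping.lookup Q x))"
    by (simp add: lookup_add sum.distrib distrib_left)
  also have "\<dots> = momentum P + momentum Q"
    by (simp add: momentum_superset[OF f])
  finally show ?thesis .
qed

lemma momentum_single: "momentum (Poly_Mapping.single x (1::nat)) = snd x"
  unfolding momentum_def by simp

lemma finite_bounded_poly_mappings:
  assumes "finite K"
  shows "finite {t :: 'a \<Rightarrow>\<^sub>0 nat. Poly_Mapping.keys t \<subseteq> K \<and> (\<forall>x. Poly_Mapping.lookup t x \<le> B)}"
proof -
  let ?F = "{f. \<forall>x. (x \<in> K \<longrightarrow> f x \<in> {0..B}) \<and> (x \<notin> K \<longrightarrow> f x = 0)}"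
  have fF: "finite ?F" by (rule finite_set_of_finite_funs) (use assms in auto)
  have "Poly_Mapping.lookup ` {t :: 'a \<Rightarrow>\<^sub>0 nat. Poly_Mapping.keys t \<subseteq> K \<and> (\<forall>x. Poly_Mapping.lookup t x \<le> B)} \<subseteq> ?F"
    by (auto simp: in_keys_iff)
  then have "finite (Poly_Mapping.lookup ` {t :: 'a \<Rightarrow>\<^sub>0 nat. Poly_Mapping.keys t \<subseteq> K \<and> (\<forall>x. Poly_Mapping.lookup t x \<le> B)})"
    using fF finite_subset by blast
  moreover have "inj_on Poly_Mapping.lookup X" for X :: "('a \<Rightarrow>\<^sub>0 nat) set"
    by (rule inj_onI) (simp add: poly_mapping_eqI)
  ultimately show ?thesis using finite_imageD by blast
qed

definition max_lookup :: "('a \<Rightarrow>\<^sub>0 nat) \<Rightarrow> nat" where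
  "max_lookup P = Max (insert 0 (Poly_Mapping.lookup P ` Poly_Mapping.keys P))"

lemma max_lookup_ge: "Poly_Mapping.lookup P x \<le> max_lookup P"
  unfolding max_lookup_def by (cases "x \<in> Poly_Mapping.keys P") (auto simp: in_keys_iff)

lemma finite_splittings: "finite {(Q1, Q2). Q1 + Q2 = (P :: 'a \<Rightarrow>\<^sub>0 nat)}"
proof -
  let ?K = "{Q :: 'a \<Rightarrow>\<^sub>0 nat. Poly_Mapping.keys Q \<subseteq> Poly_Mapping.keys P \<and> (\<forall>x. Poly_Mapping.lookup Q x \<le> max_lookup P)}"
  have below: "Q \<in> ?K" if "\<And>x. Poly_Mapping.lookup Q x \<le> Poly_Mapping.lookup P x" for Q
  proof -
    have "Poly_Mapping.keys Q \<subseteq> Poly_Mapping.keys P"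
    proof
      fix x assume "x \<in> Poly_Mapping.keys Q"
      with that[of x] show "x \<in> Poly_Mapping.keys P" by (simp add: in_keys_iff)
    qed
    moreover have "Poly_Mapping.lookup Q x \<le> max_lookup P" for x
      using that[of x] max_lookup_ge[of P x] by linarith
    ultimately show ?thesis by simp
  qed
  have "{(Q1, Q2). Q1 + Q2 = P} \<subseteq> ?K \<times> ?K"
  proof
    fix z assume "z \<in> {(Q1, Q2). Q1 + Q2 = P}"
    then obtain Q1 Q2 where z: "z = (Q1, Q2)" and split: "Q1 + Q2 = P" by blast
    have "Q1 \<in> ?K" "Q2 \<in> ?K"
      by (rule below, simp add: split[symmetric] lookup_add)+
    then show "z \<in> ?K \<times> ?K" using z by simp
  qed
  then show ?thesis
    by (rule finite_subset) (intro finite_cartesian_product finite_bounded_poly_mappings; simp)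
qed

lemma poly_mapping_remove_single: "Poly_Mapping.lookup m x \<noteq> 0 \<Longrightarrow> m = (m - Poly_Mapping.single x 1) + Poly_Mapping.single x (1::nat)"
  by (intro poly_mapping_eqI) (auto simp: lookup_add lookup_minus lookup_single when_def)

lemma add_single_cancel: "(Q1 + Poly_Mapping.single y (1::nat) + Q2 = P + Poly_Mapping.single y 1) \<longleftrightarrow> Q1 + Q2 = P"
  by (metis add.commute add.left_commute add_right_cancel)

lemma add_single_cancel2: "(Q1 + (Q2 + Poly_Mapping.single y (1::nat)) = P + Poly_Mapping.single y 1) \<longleftrightarrow> Q1 + Q2 = P"
  by (metis add.assoc add_right_cancel)

section \<open>The star product\<close>

text \<open>The summation data of the star product: t (al, be, k) is the number of factors
  k etainv al be d/dp^al_k (x) d/dp^be_-k taken from the exponential; a and b are the resulting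
  differentiation multi-indices of the left and right factor.\<close>

definition contraction :: "nat \<Rightarrow> ((nat \<times> nat \<times> nat) \<Rightarrow>\<^sub>0 nat) \<Rightarrow> pmon \<Rightarrow> pmon \<Rightarrow> bool" where
  "contraction N t a b \<longleftrightarrow> (\<forall>x\<in>Poly_Mapping.keys t. case x of (al,be,k) \<Rightarrow> al \<in> {1..N} \<and> be \<in> {1..N} \<and> 0 < k) \<and>
         (\<forall>al k. Poly_Mapping.lookup a (al,k) =
             (if 0 < k then (\<Sum>be\<in>{1..N}. Poly_Mapping.lookup t (al,be,nat k)) else 0)) \<and>
         (\<forall>be k. Poly_Mapping.lookup b (be,k) =
             (if k < 0 then (\<Sum>al\<in>{1..N}. Poly_Mapping.lookup t (al,be,nat (-k))) else 0))"

definition contraction_weight :: "(nat \<Rightarrow> nat \<Rightarrow> complex) \<Rightarrow> ((nat \<times> nat \<times> nat) \<Rightarrow>\<^sub>0 nat) \<Rightarrow> complex" where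
  "contraction_weight etainv t = \<i> ^ (\<Sum>x\<in>Poly_Mapping.keys t. Poly_Mapping.lookup t x) *
           (\<Prod>x\<in>Poly_Mapping.keys t. (case x of (al,be,k) \<Rightarrow> (of_nat k * etainv al be) ^ Poly_Mapping.lookup t x)
                            / fact (Poly_Mapping.lookup t x))"

definition contraction_order :: "((nat \<times> nat \<times> nat) \<Rightarrow>\<^sub>0 nat) \<Rightarrow> nat" where
  "contraction_order t = (\<Sum>x\<in>Poly_Mapping.keys t. Poly_Mapping.lookup t x)"

type_synonym star_index = "((nat \<times> nat \<times> nat) \<Rightarrow>\<^sub>0 nat) \<times> pmon \<times> pmon \<times> pmon \<times> pmon \<times> nat \<times> nat \<times> nat"

definition star_term :: "nat \<Rightarrow> (nat \<Rightarrow> nat \<Rightarrow> complex) \<Rightarrow> pser \<Rightarrow> pser \<Rightarrow> pmon \<Rightarrow> nat \<Rightarrow> nat \<Rightarrow> star_index \<Rightarrow> complex" where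
  "star_term N etainv A B P e h = (\<lambda>(t,a,b,Q1,Q2,e1,h1,h2).
     if contraction N t a b \<and> Q1 + Q2 = P \<and> e1 \<le> e \<and> h1 + h2 + contraction_order t = h
     then contraction_weight etainv t * (A (Q1 + a) e1 h1 * pfact (Q1 + a) / pfact Q1) *
           (B (Q2 + b) (e - e1) h2 * pfact (Q2 + b) / pfact Q2)
     else 0)"

lemma star_eq_fsum_star_term: "star N etainv A B P e h = fsum (star_term N etainv A B P e h)"
  unfolding star_def star_term_def contraction_def contraction_weight_def contraction_order_def by (simp add: case_prod_beta)

definition max_mode :: "((nat \<times> nat \<times> nat) \<Rightarrow>\<^sub>0 nat) \<Rightarrow> nat" where
  "max_mode t = Max (insert 0 ((\<lambda>x. snd (snd x)) ` Poly_Mapping.keys t))"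

lemma max_mode_ge: "x \<in> Poly_Mapping.keys t \<Longrightarrow> snd (snd x) \<le> max_mode t"
  unfolding max_mode_def by (rule Max_ge) auto

lemma contraction_keys_subset:
  assumes "contraction N t a b"
  shows "Poly_Mapping.keys t \<subseteq> {1..N} \<times> {1..N} \<times> {1..max_mode t}"
proof
  fix x assume x: "x \<in> Poly_Mapping.keys t"
  obtain al be k where xe: "x = (al,be,k)" by (cases x) auto
  have "al \<in> {1..N} \<and> be \<in> {1..N} \<and> 0 < k" using assms x unfolding contraction_def xe by fastforce
  moreover have "k \<le> max_mode t" using max_mode_ge[OF x] xe by simp
  ultimately show "x \<in> {1..N} \<times> {1..N} \<times> {1..max_mode t}" using xe by auto
qed

lemma contraction_sum_expand:
  assumes "contraction N t a b"
  shows "(\<Sum>x\<in>Poly_Mapping.keys t. g x * int (Poly_Mapping.lookup t x)) =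
     (\<Sum>al\<in>{1..N}. \<Sum>be\<in>{1..N}. \<Sum>k\<in>{1..max_mode t}. g (al,be,k) * int (Poly_Mapping.lookup t (al,be,k)))"
proof -
  have "(\<Sum>x\<in>Poly_Mapping.keys t. g x * int (Poly_Mapping.lookup t x)) =
        (\<Sum>x\<in>{1..N} \<times> {1..N} \<times> {1..max_mode t}. g x * int (Poly_Mapping.lookup t x))"
    by (rule sum_keys_superset[OF _ contraction_keys_subset[OF assms]]) auto
  also have "\<dots> = (\<Sum>al\<in>{1..N}. \<Sum>be\<in>{1..N}. \<Sum>k\<in>{1..max_mode t}. g (al,be,k) * int (Poly_Mapping.lookup t (al,be,k)))"
    by (simp add: sum.cartesian_product)
  finally show ?thesis .
qed

lemma contraction_momentum_left:
  assumes "contraction N t a b"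
  shows "momentum a = (\<Sum>x\<in>Poly_Mapping.keys t. int (snd (snd x)) * int (Poly_Mapping.lookup t x))"
proof -
  let ?K = "max_mode t"
  have la: "Poly_Mapping.lookup a (al,k) =
             (if 0 < k then (\<Sum>be\<in>{1..N}. Poly_Mapping.lookup t (al,be,nat k)) else 0)" for al k
    using assms unfolding contraction_def by blast
  have kt: "Poly_Mapping.keys t \<subseteq> {1..N} \<times> {1..N} \<times> {1..?K}" by (rule contraction_keys_subset[OF assms])
  have ka: "Poly_Mapping.keys a \<subseteq> {1..N} \<times> (int ` {1..?K})"
  proof
    fix y assume y: "y \<in> Poly_Mapping.keys a"
    obtain al k where ye: "y = (al,k)" by (cases y) auto
    have nz: "Poly_Mapping.lookup a (al,k) \<noteq> 0" using y ye by (simp add: in_keys_iff)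
    then have k0: "0 < k" using la[of al k] by (auto split: if_splits)
    then have "(\<Sum>be\<in>{1..N}. Poly_Mapping.lookup t (al,be,nat k)) \<noteq> 0" using nz la[of al k] by simp
    then obtain be where "be \<in> {1..N}" "Poly_Mapping.lookup t (al,be,nat k) \<noteq> 0"
      by (meson sum.neutral)
    then have "(al,be,nat k) \<in> Poly_Mapping.keys t" by (simp add: in_keys_iff)
    then have "(al,be,nat k) \<in> {1..N} \<times> {1..N} \<times> {1..?K}" using kt by blast
    then have "al \<in> {1..N}" "nat k \<in> {1..?K}" by auto
    moreover have "k = int (nat k)" using k0 by simp
    ultimately show "y \<in> {1..N} \<times> (int ` {1..?K})" using ye by blast
  qed
  have "momentum a = (\<Sum>y\<in>{1..N} \<times> (int ` {1..?K}). snd y * int (Poly_Mapping.lookup a y))"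
    by (rule momentum_superset[OF _ ka]) auto
  also have "\<dots> = (\<Sum>al\<in>{1..N}. \<Sum>k'\<in>int ` {1..?K}. k' * int (Poly_Mapping.lookup a (al,k')))"
    by (simp add: sum.cartesian_product split_beta)
  also have "\<dots> = (\<Sum>al\<in>{1..N}. \<Sum>k\<in>{1..?K}. int k * int (Poly_Mapping.lookup a (al,int k)))"
    by (rule sum.cong[OF refl], subst sum.reindex) (auto simp: inj_on_def)
  also have "\<dots> = (\<Sum>al\<in>{1..N}. \<Sum>k\<in>{1..?K}. \<Sum>be\<in>{1..N}. int k * int (Poly_Mapping.lookup t (al,be,k)))"
    by (rule sum.cong[OF refl], rule sum.cong[OF refl]) (simp add: la sum_distrib_left)
  also have "\<dots> = (\<Sum>al\<in>{1..N}. \<Sum>be\<in>{1..N}. \<Sum>k\<in>{1..?K}. int k * int (Poly_Mapping.lookup t (al,be,k)))"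
    by (rule sum.cong[OF refl], rule sum.swap)
  also have "\<dots> = (\<Sum>x\<in>Poly_Mapping.keys t. int (snd (snd x)) * int (Poly_Mapping.lookup t x))"
    by (subst contraction_sum_expand[OF assms]) simp
  finally show ?thesis .
qed

lemma contraction_momentum_right:
  assumes "contraction N t a b"
  shows "momentum b = - (\<Sum>x\<in>Poly_Mapping.keys t. int (snd (snd x)) * int (Poly_Mapping.lookup t x))"
proof -
  let ?K = "max_mode t"
  have lb: "Poly_Mapping.lookup b (be,k) =
             (if k < 0 then (\<Sum>al\<in>{1..N}. Poly_Mapping.lookup t (al,be,nat (-k))) else 0)" for be k
    using assms unfolding contraction_def by blast
  have kt: "Poly_Mapping.keys t \<subseteq> {1..N} \<times> {1..N} \<times> {1..?K}" by (rule contraction_keys_subset[OF assms])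
  have kb: "Poly_Mapping.keys b \<subseteq> {1..N} \<times> ((\<lambda>k. - int k) ` {1..?K})"
  proof
    fix y assume y: "y \<in> Poly_Mapping.keys b"
    obtain be k where ye: "y = (be,k)" by (cases y) auto
    have nz: "Poly_Mapping.lookup b (be,k) \<noteq> 0" using y ye by (simp add: in_keys_iff)
    then have k0: "k < 0" using lb[of be k] by (auto split: if_splits)
    then have "(\<Sum>al\<in>{1..N}. Poly_Mapping.lookup t (al,be,nat (-k))) \<noteq> 0" using nz lb[of be k] by simp
    then obtain al where "al \<in> {1..N}" "Poly_Mapping.lookup t (al,be,nat (-k)) \<noteq> 0"
      by (meson sum.neutral)
    then have "(al,be,nat (-k)) \<in> Poly_Mapping.keys t" by (simp add: in_keys_iff)
    then have "(al,be,nat (-k)) \<in> {1..N} \<times> {1..N} \<times> {1..?K}" using kt by blast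
    then have "be \<in> {1..N}" "nat (-k) \<in> {1..?K}" by auto
    moreover have "k = - int (nat (-k))" using k0 by simp
    ultimately show "y \<in> {1..N} \<times> ((\<lambda>k. - int k) ` {1..?K})" using ye by blast
  qed
  have "momentum b = (\<Sum>y\<in>{1..N} \<times> ((\<lambda>k. - int k) ` {1..?K}). snd y * int (Poly_Mapping.lookup b y))"
    by (rule momentum_superset[OF _ kb]) auto
  also have "\<dots> = (\<Sum>be\<in>{1..N}. \<Sum>k'\<in>(\<lambda>k. - int k) ` {1..?K}. k' * int (Poly_Mapping.lookup b (be,k')))"
    by (simp add: sum.cartesian_product split_beta)
  also have "\<dots> = (\<Sum>be\<in>{1..N}. \<Sum>k\<in>{1..?K}. - int k * int (Poly_Mapping.lookup b (be,- int k)))"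
    by (rule sum.cong[OF refl], subst sum.reindex) (auto simp: inj_on_def)
  also have "\<dots> = (\<Sum>be\<in>{1..N}. \<Sum>k\<in>{1..?K}. \<Sum>al\<in>{1..N}. - (int k * int (Poly_Mapping.lookup t (al,be,k))))"
    by (rule sum.cong[OF refl], rule sum.cong[OF refl]) (simp add: lb sum_distrib_left sum_negf)
  also have "\<dots> = (\<Sum>be\<in>{1..N}. \<Sum>al\<in>{1..N}. \<Sum>k\<in>{1..?K}. - (int k * int (Poly_Mapping.lookup t (al,be,k))))"
    by (rule sum.cong[OF refl], rule sum.swap)
  also have "\<dots> = (\<Sum>al\<in>{1..N}. \<Sum>be\<in>{1..N}. \<Sum>k\<in>{1..?K}. - (int k * int (Poly_Mapping.lookup t (al,be,k))))"
    by (rule sum.swap)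
  also have "\<dots> = - (\<Sum>al\<in>{1..N}. \<Sum>be\<in>{1..N}. \<Sum>k\<in>{1..?K}. int k * int (Poly_Mapping.lookup t (al,be,k)))"
    by (simp add: sum_negf)
  also have "\<dots> = - (\<Sum>x\<in>Poly_Mapping.keys t. int (snd (snd x)) * int (Poly_Mapping.lookup t x))"
    by (subst contraction_sum_expand[OF assms]) simp
  finally show ?thesis .
qed

lemma contraction_momentum_balance: "contraction N t a b \<Longrightarrow> momentum a + momentum b = 0"
  by (simp add: contraction_momentum_left contraction_momentum_right)

lemma contraction_mode_le_momentum:
  assumes "contraction N t a b" "x \<in> Poly_Mapping.keys t"
  shows "int (snd (snd x)) \<le> momentum a"
proof -
  have "int (snd (snd x)) \<le> int (snd (snd x)) * int (Poly_Mapping.lookup t x)"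
  proof -
    obtain n where "Poly_Mapping.lookup t x = Suc n" using assms(2)
      by (metis in_keys_iff not0_implies_Suc)
    then show ?thesis by (simp add: algebra_simps)
  qed
  also have "\<dots> \<le> (\<Sum>x\<in>Poly_Mapping.keys t. int (snd (snd x)) * int (Poly_Mapping.lookup t x))"
    by (rule member_le_sum[OF assms(2)]) auto
  finally show ?thesis by (simp add: contraction_momentum_left[OF assms(1)])
qed

lemma lookup_le_contraction_order: "Poly_Mapping.lookup t x \<le> contraction_order t"
proof (cases "x \<in> Poly_Mapping.keys t")
  case True then show ?thesis unfolding contraction_order_def by (rule member_le_sum) auto
next
  case False then show ?thesis by (simp add: in_keys_iff)
qed

definition left_indices :: "nat \<Rightarrow> ((nat \<times> nat \<times> nat) \<Rightarrow>\<^sub>0 nat) \<Rightarrow> pmon" where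
  "left_indices N t = (THE a. \<forall>al k. Poly_Mapping.lookup a (al,k) =
             (if 0 < k then (\<Sum>be\<in>{1..N}. Poly_Mapping.lookup t (al,be,nat k)) else 0))"

definition right_indices :: "nat \<Rightarrow> ((nat \<times> nat \<times> nat) \<Rightarrow>\<^sub>0 nat) \<Rightarrow> pmon" where
  "right_indices N t = (THE b. \<forall>be k. Poly_Mapping.lookup b (be,k) =
             (if k < 0 then (\<Sum>al\<in>{1..N}. Poly_Mapping.lookup t (al,be,nat (-k))) else 0))"

lemma contraction_left_indices: "contraction N t a b \<Longrightarrow> a = left_indices N t"
  unfolding left_indices_def
  by (rule the_equality[symmetric]) (auto simp: contraction_def intro!: poly_mapping_eqI)

lemma contraction_right_indices: "contraction N t a b \<Longrightarrow> b = right_indices N t"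
  unfolding right_indices_def
  by (rule the_equality[symmetric]) (auto simp: contraction_def intro!: poly_mapping_eqI)

definition has_momentum :: "int \<Rightarrow> pser \<Rightarrow> bool" where
  "has_momentum m A \<longleftrightarrow> (\<forall>Q e h. A Q e h \<noteq> 0 \<longrightarrow> momentum Q = m)"

lemma star_term_nonzeroD:
  assumes "star_term N etainv A B P e h (t,a,b,Q1,Q2,e1,h1,h2) \<noteq> 0"
  shows "contraction N t a b" "Q1 + Q2 = P" "e1 \<le> e" "h1 + h2 + contraction_order t = h"
    "A (Q1 + a) e1 h1 \<noteq> 0" "B (Q2 + b) (e - e1) h2 \<noteq> 0"
  using assms unfolding star_term_def by (auto split: if_splits)

lemma finite_star_term_support_if_modes_bounded:
  assumes bound: "\<And>t a b Q1 Q2 e1 h1 h2 x. star_term N etainv A B P e h (t,a,b,Q1,Q2,e1,h1,h2) \<noteq> 0 \<Longrightarrow>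
      x \<in> Poly_Mapping.keys t \<Longrightarrow> snd (snd x) \<le> Kb"
  shows "finite {T. star_term N etainv A B P e h T \<noteq> 0}"
proof -
  let ?TS = "{t :: (nat \<times> nat \<times> nat) \<Rightarrow>\<^sub>0 nat. Poly_Mapping.keys t \<subseteq> {1..N} \<times> {1..N} \<times> {1..Kb} \<and> (\<forall>x. Poly_Mapping.lookup t x \<le> h)}"
  let ?SP = "{(Q1, Q2). Q1 + Q2 = P}"
  let ?D = "?TS \<times> ?SP \<times> {..e} \<times> {..h} \<times> {..h}"
  let ?f = "\<lambda>(t, (Q1,Q2), e1, h1, h2). (t, left_indices N t, right_indices N t, Q1, Q2, e1, h1, h2)"
  have fD: "finite ?D"
    by (intro finite_cartesian_product finite_bounded_poly_mappings finite_splittings) auto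
  have "{T. star_term N etainv A B P e h T \<noteq> 0} \<subseteq> ?f ` ?D"
  proof
    fix T assume "T \<in> {T. star_term N etainv A B P e h T \<noteq> 0}"
    then obtain t a b Q1 Q2 e1 h1 h2 where Te: "T = (t,a,b,Q1,Q2,e1,h1,h2)"
      and nz: "star_term N etainv A B P e h (t,a,b,Q1,Q2,e1,h1,h2) \<noteq> 0" by (cases T) auto
    note z = star_term_nonzeroD[OF nz]
    have kt: "Poly_Mapping.keys t \<subseteq> {1..N} \<times> {1..N} \<times> {1..Kb}"
    proof
      fix x assume x: "x \<in> Poly_Mapping.keys t"
      have "x \<in> {1..N} \<times> {1..N} \<times> {1..max_mode t}" using contraction_keys_subset[OF z(1)] x by blast
      moreover have "snd (snd x) \<le> Kb" by (rule bound[OF nz x])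
      ultimately show "x \<in> {1..N} \<times> {1..N} \<times> {1..Kb}" by auto
    qed
    have vt: "\<forall>x. Poly_Mapping.lookup t x \<le> h"
      using lookup_le_contraction_order z(4) by (metis le_add2 order_trans)
    have "T = ?f (t, (Q1,Q2), e1, h1, h2)"
      using Te contraction_left_indices[OF z(1)] contraction_right_indices[OF z(1)] by simp
    moreover have "(t, (Q1,Q2), e1, h1, h2) \<in> ?D"
      using kt vt z(2) z(3) z(4) by auto
    ultimately show "T \<in> ?f ` ?D" by (rule image_eqI)
  qed
  then show ?thesis by (rule finite_subset) (rule finite_imageI[OF fD])
qed

definition splitting_momentum_bound :: "pmon \<Rightarrow> int" where
  "splitting_momentum_bound P = Max ((\<lambda>(Q1,Q2). \<bar>momentum Q1\<bar> + \<bar>momentum Q2\<bar>) ` {(Q1, Q2). Q1 + Q2 = P})"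

lemma splitting_momentum_bound_ge: "Q1 + Q2 = P \<Longrightarrow> \<bar>momentum Q1\<bar> + \<bar>momentum Q2\<bar> \<le> splitting_momentum_bound P"
  unfolding splitting_momentum_bound_def by (rule Max_ge) (auto intro: finite_imageI finite_splittings)

text \<open>Fixing the momentum of A bounds the modes occurring in t, so the series defining
  the star product is a finite sum.\<close>

lemma finite_star_term_support:
  assumes "has_momentum mA A"
  shows "finite {T. star_term N etainv A B P e h T \<noteq> 0}"
proof (rule finite_star_term_support_if_modes_bounded[where Kb = "nat (\<bar>mA\<bar> + splitting_momentum_bound P)"])
  fix t a b Q1 Q2 e1 h1 h2 x
  assume nz: "star_term N etainv A B P e h (t, a, b, Q1, Q2, e1, h1, h2) \<noteq> 0" and x: "x \<in> Poly_Mapping.keys t"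
  note z = star_term_nonzeroD[OF nz]
  have "momentum (Q1 + a) = mA" using assms z(5) unfolding has_momentum_def by blast
  then have m: "momentum Q1 + momentum a = mA" by (simp add: momentum_add)
  have "int (snd (snd x)) \<le> momentum a" by (rule contraction_mode_le_momentum[OF z(1) x])
  moreover have "\<bar>momentum Q1\<bar> + \<bar>momentum Q2\<bar> \<le> splitting_momentum_bound P" by (rule splitting_momentum_bound_ge[OF z(2)])
  ultimately show "snd (snd x) \<le> nat (\<bar>mA\<bar> + splitting_momentum_bound P)" using m by linarith
qed

lemma star_cong_left:
  assumes "has_momentum 0 B" "\<forall>Q e h. momentum Q = momentum P \<longrightarrow> A Q e h = A' Q e h"
  shows "star N etainv A B P e h = star N etainv A' B P e h"
proof -
  have "star_term N etainv A B P e h T = star_term N etainv A' B P e h T" for T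
  proof -
    obtain t a b Q1 Q2 e1 h1 h2 where Te: "T = (t,a,b,Q1,Q2,e1,h1,h2)" by (cases T) auto
    show ?thesis
    proof (cases "contraction N t a b \<and> Q1 + Q2 = P \<and> B (Q2 + b) (e - e1) h2 \<noteq> 0")
      case True
      then have "momentum (Q2 + b) = 0" using assms(1) unfolding has_momentum_def by blast
      moreover have "momentum a + momentum b = 0" using True contraction_momentum_balance by blast
      moreover have "momentum Q1 + momentum Q2 = momentum P" using True momentum_add by metis
      ultimately have "momentum (Q1 + a) = momentum P" by (simp add: momentum_add)
      then have "A (Q1 + a) = A' (Q1 + a)" using assms(2) by blast
      then show ?thesis unfolding Te star_term_def by simp
    next
      case False
      then show ?thesis unfolding Te star_term_def by auto
    qed
  qed
  then have "star_term N etainv A B P e h = star_term N etainv A' B P e h" by (rule ext)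
  then show ?thesis by (simp add: star_eq_fsum_star_term)
qed

lemma star_cong_right:
  assumes "has_momentum 0 B" "\<forall>Q e h. momentum Q = momentum P \<longrightarrow> A Q e h = A' Q e h"
  shows "star N etainv B A P e h = star N etainv B A' P e h"
proof -
  have "star_term N etainv B A P e h T = star_term N etainv B A' P e h T" for T
  proof -
    obtain t a b Q1 Q2 e1 h1 h2 where Te: "T = (t,a,b,Q1,Q2,e1,h1,h2)" by (cases T) auto
    show ?thesis
    proof (cases "contraction N t a b \<and> Q1 + Q2 = P \<and> B (Q1 + a) e1 h1 \<noteq> 0")
      case True
      then have "momentum (Q1 + a) = 0" using assms(1) unfolding has_momentum_def by blast
      moreover have "momentum a + momentum b = 0" using True contraction_momentum_balance by blast
      moreover have "momentum Q1 + momentum Q2 = momentum P" using True momentum_add by metis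
      ultimately have "momentum (Q2 + b) = momentum P" by (simp add: momentum_add)
      then have "A (Q2 + b) = A' (Q2 + b)" using assms(2) by blast
      then show ?thesis unfolding Te star_term_def by simp
    next
      case False
      then show ?thesis unfolding Te star_term_def by auto
    qed
  qed
  then have "star_term N etainv B A P e h = star_term N etainv B A' P e h" by (rule ext)
  then show ?thesis by (simp add: star_eq_fsum_star_term)
qed

definition pdiff :: "nat \<times> int \<Rightarrow> pser \<Rightarrow> pser" where
  "pdiff y A = (\<lambda>Q e h. of_nat (Poly_Mapping.lookup Q y + 1) * A (Q + Poly_Mapping.single y 1) e h)"

definition insert_left :: "nat \<times> int \<Rightarrow> star_index \<Rightarrow> star_index" where
  "insert_left y = (\<lambda>(t,a,b,Q1,Q2,e1,h1,h2). (t,a,b,Q1 + Poly_Mapping.single y 1,Q2,e1,h1,h2))"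

definition insert_right :: "nat \<times> int \<Rightarrow> star_index \<Rightarrow> star_index" where
  "insert_right y = (\<lambda>(t,a,b,Q1,Q2,e1,h1,h2). (t,a,b,Q1,Q2 + Poly_Mapping.single y 1,e1,h1,h2))"

definition left_multiplicity :: "nat \<times> int \<Rightarrow> star_index \<Rightarrow> complex" where
  "left_multiplicity y = (\<lambda>(t,a,b,Q1,Q2,e1,h1,h2). of_nat (Poly_Mapping.lookup Q1 y))"

definition right_multiplicity :: "nat \<times> int \<Rightarrow> star_index \<Rightarrow> complex" where
  "right_multiplicity y = (\<lambda>(t,a,b,Q1,Q2,e1,h1,h2). of_nat (Poly_Mapping.lookup Q2 y))"

lemma star_term_insert_left:
  "left_multiplicity y (insert_left y T) * star_term N etainv A B (P + Poly_Mapping.single y 1) e h (insert_left y T) = star_term N etainv (pdiff y A) B P e h T"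
proof -
  obtain t a b Q1 Q2 e1 h1 h2 where Te: "T = (t,a,b,Q1,Q2,e1,h1,h2)" by (cases T) auto
  let ?e = "Poly_Mapping.single y (1::nat)"
  have c: "(Q1 + ?e + Q2 = P + ?e) = (Q1 + Q2 = P)" by (rule add_single_cancel)
  have a1: "Q1 + ?e + a = Q1 + a + ?e" by (simp add: add_ac)
  have p1: "pfact (Q1 + a + ?e) = of_nat (Poly_Mapping.lookup (Q1 + a) y + 1) * pfact (Q1 + a)"
    by (rule pfact_add_single)
  have p2: "pfact (Q1 + ?e) = of_nat (Poly_Mapping.lookup Q1 y + 1) * pfact Q1" by (rule pfact_add_single)
  have l1: "Poly_Mapping.lookup (Q1 + ?e) y = Poly_Mapping.lookup Q1 y + 1" by (simp add: lookup_add)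
  have nz: "(of_nat (Poly_Mapping.lookup Q1 y + 1) :: complex) \<noteq> 0" by (simp only: of_nat_eq_0_iff)
  have L: "left_multiplicity y (insert_left y T) * star_term N etainv A B (P + ?e) e h (insert_left y T) =
     (if contraction N t a b \<and> Q1 + Q2 = P \<and> e1 \<le> e \<and> h1 + h2 + contraction_order t = h
     then of_nat (Poly_Mapping.lookup Q1 y + 1) * (contraction_weight etainv t * (A (Q1 + a + ?e) e1 h1 * (of_nat (Poly_Mapping.lookup (Q1 + a) y + 1) * pfact (Q1 + a)) / (of_nat (Poly_Mapping.lookup Q1 y + 1) * pfact Q1)) *
           (B (Q2 + b) (e - e1) h2 * pfact (Q2 + b) / pfact Q2))
     else 0)"
    unfolding Te insert_left_def left_multiplicity_def star_term_def
    by (simp only: prod.case c a1 p1 p2 l1)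
      (simp only: if_distrib[of "times _"] mult_zero_right)
  have R: "star_term N etainv (pdiff y A) B P e h T =
     (if contraction N t a b \<and> Q1 + Q2 = P \<and> e1 \<le> e \<and> h1 + h2 + contraction_order t = h
     then contraction_weight etainv t * ((of_nat (Poly_Mapping.lookup (Q1 + a) y + 1) * A (Q1 + a + ?e) e1 h1) * pfact (Q1 + a) / pfact Q1) *
           (B (Q2 + b) (e - e1) h2 * pfact (Q2 + b) / pfact Q2)
     else 0)"
    unfolding Te star_term_def pdiff_def by (simp only: prod.case)
  have cancel: "c * (s * (v * (c2 * p) / (c * d)) * bp) = s * (c2 * v * p / d) * bp"
    if "c \<noteq> 0" "d \<noteq> 0" for c d s v c2 p bp :: complex
    using that by (simp add: field_simps)
  show ?thesis unfolding L R by (simp only: cancel[OF nz pfact_nonzero])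
qed

lemma star_term_insert_right:
  "right_multiplicity y (insert_right y T) * star_term N etainv A B (P + Poly_Mapping.single y 1) e h (insert_right y T) = star_term N etainv A (pdiff y B) P e h T"
proof -
  obtain t a b Q1 Q2 e1 h1 h2 where Te: "T = (t,a,b,Q1,Q2,e1,h1,h2)" by (cases T) auto
  let ?e = "Poly_Mapping.single y (1::nat)"
  have c: "(Q1 + (Q2 + ?e) = P + ?e) = (Q1 + Q2 = P)" by (rule add_single_cancel2)
  have a1: "Q2 + ?e + b = Q2 + b + ?e" by (simp add: add_ac)
  have p1: "pfact (Q2 + b + ?e) = of_nat (Poly_Mapping.lookup (Q2 + b) y + 1) * pfact (Q2 + b)"
    by (rule pfact_add_single)
  have p2: "pfact (Q2 + ?e) = of_nat (Poly_Mapping.lookup Q2 y + 1) * pfact Q2" by (rule pfact_add_single)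
  have l1: "Poly_Mapping.lookup (Q2 + ?e) y = Poly_Mapping.lookup Q2 y + 1" by (simp add: lookup_add)
  have nz: "(of_nat (Poly_Mapping.lookup Q2 y + 1) :: complex) \<noteq> 0" by (simp only: of_nat_eq_0_iff)
  have L: "right_multiplicity y (insert_right y T) * star_term N etainv A B (P + ?e) e h (insert_right y T) =
     (if contraction N t a b \<and> Q1 + Q2 = P \<and> e1 \<le> e \<and> h1 + h2 + contraction_order t = h
     then of_nat (Poly_Mapping.lookup Q2 y + 1) * (contraction_weight etainv t * (A (Q1 + a) e1 h1 * pfact (Q1 + a) / pfact Q1) *
           (B (Q2 + b + ?e) (e - e1) h2 * (of_nat (Poly_Mapping.lookup (Q2 + b) y + 1) * pfact (Q2 + b)) / (of_nat (Poly_Mapping.lookup Q2 y + 1) * pfact Q2)))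
     else 0)"
    unfolding Te insert_right_def right_multiplicity_def star_term_def
    by (simp only: prod.case c a1 p1 p2 l1) (simp only: if_distrib[of "times _"] mult_zero_right)
  have R: "star_term N etainv A (pdiff y B) P e h T =
     (if contraction N t a b \<and> Q1 + Q2 = P \<and> e1 \<le> e \<and> h1 + h2 + contraction_order t = h
     then contraction_weight etainv t * (A (Q1 + a) e1 h1 * pfact (Q1 + a) / pfact Q1) *
           ((of_nat (Poly_Mapping.lookup (Q2 + b) y + 1) * B (Q2 + b + ?e) (e - e1) h2) * pfact (Q2 + b) / pfact Q2)
     else 0)"
    unfolding Te star_term_def pdiff_def by (simp only: prod.case)
  have cancel: "c * (s * ap * (v * (c2 * p) / (c * d))) = s * ap * (c2 * v * p / d)"
    if "c \<noteq> 0" "d \<noteq> 0" for c d s ap v c2 p :: complex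
    using that by (simp add: field_simps)
  show ?thesis unfolding L R by (simp only: cancel[OF nz pfact_nonzero])
qed

lemma multiplicity_split:
  assumes "star_term N etainv A B (P + Poly_Mapping.single y 1) e h T \<noteq> 0"
  shows "of_nat (Poly_Mapping.lookup P y + 1) = left_multiplicity y T + right_multiplicity y T"
proof -
  obtain t a b Q1 Q2 e1 h1 h2 where Te: "T = (t,a,b,Q1,Q2,e1,h1,h2)" by (cases T) auto
  have "Q1 + Q2 = P + Poly_Mapping.single y 1" using star_term_nonzeroD(2) assms Te by blast
  then have "Poly_Mapping.lookup Q1 y + Poly_Mapping.lookup Q2 y = Poly_Mapping.lookup P y + 1"
    by (metis lookup_add lookup_single_eq)
  then show ?thesis unfolding Te left_multiplicity_def right_multiplicity_def by (simp only: prod.case) (metis of_nat_add)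
qed

lemma inj_insert_left: "inj (insert_left y)"
  by (rule injI) (auto simp: insert_left_def split: prod.splits)

lemma inj_insert_right: "inj (insert_right y)"
  by (rule injI) (auto simp: insert_right_def split: prod.splits)

lemma range_insert_left: "left_multiplicity y T \<noteq> 0 \<Longrightarrow> T \<in> range (insert_left y)"
proof -
  assume a: "left_multiplicity y T \<noteq> 0"
  obtain t a b Q1 Q2 e1 h1 h2 where Te: "T = (t,a,b,Q1,Q2,e1,h1,h2)" by (cases T) auto
  have "Poly_Mapping.lookup Q1 y \<noteq> 0" using a unfolding Te left_multiplicity_def by simp
  then have "Q1 = (Q1 - Poly_Mapping.single y 1) + Poly_Mapping.single y 1"
    by (intro poly_mapping_eqI) (auto simp: lookup_add lookup_minus lookup_single when_def)
  then have "T = insert_left y (t,a,b,Q1 - Poly_Mapping.single y 1,Q2,e1,h1,h2)" unfolding Te insert_left_def by simp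
  then show ?thesis by blast
qed

lemma range_insert_right: "right_multiplicity y T \<noteq> 0 \<Longrightarrow> T \<in> range (insert_right y)"
proof -
  assume a: "right_multiplicity y T \<noteq> 0"
  obtain t a b Q1 Q2 e1 h1 h2 where Te: "T = (t,a,b,Q1,Q2,e1,h1,h2)" by (cases T) auto
  have "Poly_Mapping.lookup Q2 y \<noteq> 0" using a unfolding Te right_multiplicity_def by simp
  then have "Q2 = (Q2 - Poly_Mapping.single y 1) + Poly_Mapping.single y 1"
    by (intro poly_mapping_eqI) (auto simp: lookup_add lookup_minus lookup_single when_def)
  then have "T = insert_right y (t,a,b,Q1,Q2 - Poly_Mapping.single y 1,e1,h1,h2)" unfolding Te insert_right_def by simp
  then show ?thesis by blast
qed

lemma pdiff_star:
  assumes "has_momentum mA A"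
  shows "pdiff y (star N etainv A B) P e h = star N etainv (pdiff y A) B P e h + star N etainv A (pdiff y B) P e h"
proof -
  let ?P' = "P + Poly_Mapping.single y 1"
  let ?g = "star_term N etainv A B ?P' e h"
  have fin: "finite {T. ?g T \<noteq> 0}" by (rule finite_star_term_support[OF assms])
  have f1: "finite {T. left_multiplicity y T * ?g T \<noteq> 0}" by (rule finite_subset[OF _ fin]) auto
  have f2: "finite {T. right_multiplicity y T * ?g T \<noteq> 0}" by (rule finite_subset[OF _ fin]) auto
  have "pdiff y (star N etainv A B) P e h = of_nat (Poly_Mapping.lookup P y + 1) * fsum ?g"
    unfolding pdiff_def by (simp only: star_eq_fsum_star_term)
  also have "\<dots> = fsum (\<lambda>T. of_nat (Poly_Mapping.lookup P y + 1) * ?g T)" by (rule fsum_cmult[symmetric])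
  also have "\<dots> = fsum (\<lambda>T. left_multiplicity y T * ?g T + right_multiplicity y T * ?g T)"
  proof -
    have "of_nat (Poly_Mapping.lookup P y + 1) * ?g T = left_multiplicity y T * ?g T + right_multiplicity y T * ?g T" for T
    proof (cases "?g T = 0")
      case True then show ?thesis by simp
    next
      case False then show ?thesis using multiplicity_split[OF False] by (simp add: distrib_right)
    qed
    then show ?thesis by presburger
  qed
  also have "\<dots> = fsum (\<lambda>T. left_multiplicity y T * ?g T) + fsum (\<lambda>T. right_multiplicity y T * ?g T)"
    by (rule fsum_add[OF f1 f2])
  also have "fsum (\<lambda>T. left_multiplicity y T * ?g T) = fsum (\<lambda>T. left_multiplicity y (insert_left y T) * ?g (insert_left y T))"
    by (rule fsum_reindex[symmetric, OF inj_insert_left]) (auto intro: range_insert_left)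
  also have "\<dots> = star N etainv (pdiff y A) B P e h"
    by (simp only: star_term_insert_left star_eq_fsum_star_term)
  also have "fsum (\<lambda>T. right_multiplicity y T * ?g T) = fsum (\<lambda>T. right_multiplicity y (insert_right y T) * ?g (insert_right y T))"
    by (rule fsum_reindex[symmetric, OF inj_insert_right]) (auto intro: range_insert_right)
  also have "\<dots> = star N etainv A (pdiff y B) P e h"
    by (simp only: star_term_insert_right star_eq_fsum_star_term)
  finally show ?thesis .
qed

section \<open>Differential polynomials\<close>

lemma keys_dx_shift:
  "Poly_Mapping.keys m \<subseteq> insert (a, Suc k)
     (Poly_Mapping.keys (m - Poly_Mapping.single (a, Suc k) 1 + Poly_Mapping.single (a,k) (1::nat)))"
proof
  fix x assume x: "x \<in> Poly_Mapping.keys m"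
  let ?m' = "m - Poly_Mapping.single (a, Suc k) 1 + Poly_Mapping.single (a,k) (1::nat)"
  show "x \<in> insert (a, Suc k) (Poly_Mapping.keys ?m')"
  proof (cases "x = (a, Suc k)")
    case False
    then have "Poly_Mapping.lookup ?m' x \<ge> Poly_Mapping.lookup m x"
      by (simp add: lookup_add lookup_minus lookup_single when_def)
    moreover have "Poly_Mapping.lookup m x \<noteq> 0" using x by (simp add: in_keys_iff)
    ultimately have "Poly_Mapping.lookup ?m' x \<noteq> 0" by linarith
    then show ?thesis by (simp only: insert_iff in_keys_iff simp_thms)
  qed simp
qed

lemma keys_dx_shift_bound:
  assumes "\<forall>x\<in>Poly_Mapping.keys (m - Poly_Mapping.single (a, Suc j) 1 + Poly_Mapping.single (a,j) (1::nat)). snd x \<le> I"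
  shows "\<forall>x\<in>Poly_Mapping.keys m. snd x \<le> Suc I"
proof -
  have "snd (a,j) \<le> I" using assms by (simp add: in_keys_iff lookup_add)
  with assms keys_dx_shift[of m a j] show ?thesis by fastforce
qed

lemma jet_nonzero_keys: "jet m x \<noteq> 0 \<Longrightarrow> x \<in> Poly_Mapping.keys m"
  unfolding jet_def by (auto simp: in_keys_iff split: prod.splits if_splits)

lemma qdp_valid_jet_bounded:
  assumes "qdp_valid N f"
  shows "\<exists>I. \<forall>m. f m e h \<noteq> 0 \<longrightarrow> (\<forall>x\<in>Poly_Mapping.keys m. snd x \<le> I)"
proof -
  let ?J = "{jet m | m. f m e h \<noteq> 0}"
  have fJ: "finite ?J" using assms unfolding qdp_valid_def by blast
  let ?S = "\<Union>g\<in>?J. {x. g x \<noteq> 0}"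
  have fS: "finite ?S"
  proof (rule finite_UN_I[OF fJ])
    fix g assume "g \<in> ?J"
    then obtain m where "g = jet m" by blast
    then have "{x. g x \<noteq> 0} \<subseteq> Poly_Mapping.keys m" using jet_nonzero_keys by blast
    then show "finite {x. g x \<noteq> 0}" by (rule finite_subset) simp
  qed
  let ?I = "Max (insert 0 (snd ` ?S))"
  have "\<forall>m. f m e h \<noteq> 0 \<longrightarrow> (\<forall>x\<in>Poly_Mapping.keys m. snd x \<le> ?I)"
  proof (intro allI impI ballI)
    fix m x assume fnz: "f m e h \<noteq> 0" and x: "x \<in> Poly_Mapping.keys m"
    show "snd x \<le> ?I"
    proof (cases "snd x = 0")
      case True then show ?thesis by simp
    next
      case False
      then have "jet m x \<noteq> 0" using x unfolding jet_def by (auto simp: in_keys_iff split: prod.splits)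
      then have "x \<in> ?S" using fnz by blast
      then show ?thesis using fS by (intro Max_ge) auto
    qed
  qed
  then show ?thesis by blast
qed

definition jet_bound :: "qdp \<Rightarrow> nat \<Rightarrow> nat \<Rightarrow> nat" where
  "jet_bound f e h = (SOME I. \<forall>m. f m e h \<noteq> 0 \<longrightarrow> (\<forall>x\<in>Poly_Mapping.keys m. snd x \<le> I))"

lemma jet_bound_ge: "qdp_valid N f \<Longrightarrow> f m e h \<noteq> 0 \<Longrightarrow> x \<in> Poly_Mapping.keys m \<Longrightarrow> snd x \<le> jet_bound f e h"
  using someI_ex[OF qdp_valid_jet_bounded[of N f e h]] unfolding jet_bound_def by blast

lemma jet_bound_all: "qdp_valid N f \<Longrightarrow> \<forall>m. f m e h \<noteq> 0 \<longrightarrow> (\<forall>x\<in>Poly_Mapping.keys m. snd x \<le> jet_bound f e h)"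
  using jet_bound_ge by blast

lemma jetdeg_superset: "finite S \<Longrightarrow> Poly_Mapping.keys m \<subseteq> S \<Longrightarrow> jetdeg m = (\<Sum>x\<in>S. snd x * Poly_Mapping.lookup m x)"
  unfolding jetdeg_def by (rule sum_keys_superset) auto

lemma jetdeg_add_single: "jetdeg (m + Poly_Mapping.single y 1) = jetdeg m + snd y"
proof -
  let ?S = "insert y (Poly_Mapping.keys m)"
  have "jetdeg (m + Poly_Mapping.single y 1) = (\<Sum>x\<in>?S. snd x * Poly_Mapping.lookup (m + Poly_Mapping.single y 1) x)"
    by (rule jetdeg_superset) auto
  also have "\<dots> = (\<Sum>x\<in>?S. snd x * Poly_Mapping.lookup m x) + (\<Sum>x\<in>?S. if x = y then snd x else 0)"
  proof -
    have "snd x * Poly_Mapping.lookup (m + Poly_Mapping.single y 1) x = snd x * Poly_Mapping.lookup m x + (if x = y then snd x else 0)" for x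
      by (simp only: lookup_add_single) simp
    then show ?thesis by (simp only: sum.distrib)
  qed
  also have "(\<Sum>x\<in>?S. snd x * Poly_Mapping.lookup m x) = jetdeg m" by (rule jetdeg_superset[symmetric]) auto
  also have "(\<Sum>x\<in>?S. if x = y then snd x else 0) = snd y" by simp
  finally show ?thesis .
qed

lemma jetdeg_dx_shift:
  assumes "(a, Suc k) \<in> Poly_Mapping.keys m"
  shows "jetdeg (m - Poly_Mapping.single (a, Suc k) 1 + Poly_Mapping.single (a,k) 1) + 1 = jetdeg m"
proof -
  let ?m0 = "m - Poly_Mapping.single (a, Suc k) 1"
  have "m = ?m0 + Poly_Mapping.single (a, Suc k) 1" using assms by (intro poly_mapping_remove_single) (simp add: in_keys_iff)
  then have "jetdeg m = jetdeg ?m0 + Suc k" by (metis jetdeg_add_single snd_conv)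
  moreover have "jetdeg (?m0 + Poly_Mapping.single (a,k) 1) = jetdeg ?m0 + k" by (simp only: jetdeg_add_single snd_conv)
  ultimately show ?thesis by simp
qed

lemma dx_nonzeroD:
  assumes "dx g m e h \<noteq> 0"
  shows "\<exists>a k. (a, Suc k) \<in> Poly_Mapping.keys m \<and> g (m - Poly_Mapping.single (a, Suc k) 1 + Poly_Mapping.single (a,k) 1) e h \<noteq> 0"
proof (rule ccontr)
  assume "\<not> ?thesis"
  then have "\<forall>x\<in>{(a,k). (a, Suc k) \<in> Poly_Mapping.keys m}.
      of_nat (Poly_Mapping.lookup m x + 1) * g (m - Poly_Mapping.single (fst x, Suc (snd x)) 1 + Poly_Mapping.single x 1) e h = 0"
    by auto
  then have "dx g m e h = 0" unfolding dx_def by (simp only: sum.neutral)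
  then show False using assms by simp
qed

lemma dx_power_vanish: "jetdeg m < i \<Longrightarrow> (dx ^^ i) g m e h = 0"
proof (induction i arbitrary: m)
  case 0 then show ?case by simp
next
  case (Suc i)
  show ?case
  proof (rule ccontr)
    assume "(dx ^^ Suc i) g m e h \<noteq> 0"
    then have "dx ((dx ^^ i) g) m e h \<noteq> 0" by simp
    then obtain a k where k: "(a, Suc k) \<in> Poly_Mapping.keys m"
      and nz: "(dx ^^ i) g (m - Poly_Mapping.single (a, Suc k) 1 + Poly_Mapping.single (a,k) 1) e h \<noteq> 0"
      using dx_nonzeroD by blast
    have "jetdeg (m - Poly_Mapping.single (a, Suc k) 1 + Poly_Mapping.single (a,k) 1) + 1 = jetdeg m"
      by (rule jetdeg_dx_shift[OF k])
    then have "jetdeg (m - Poly_Mapping.single (a, Suc k) 1 + Poly_Mapping.single (a,k) 1) < i" using Suc.prems by simp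
    then show False using Suc.IH nz by blast
  qed
qed

lemma dx_power_zero: "(\<forall>m. g m e h = 0) \<Longrightarrow> (dx ^^ i) g m e h = 0"
proof (induction i arbitrary: m)
  case 0 then show ?case by simp
next
  case (Suc i)
  then show ?case by (simp add: dx_def)
qed

lemma qdp_valid_keysD: "qdp_valid N f \<Longrightarrow> f m e h \<noteq> 0 \<Longrightarrow> x \<in> Poly_Mapping.keys m \<Longrightarrow> 1 \<le> fst x \<and> fst x \<le> N"
  unfolding qdp_valid_def by blast

lemma qdp_valid_finite_jets: "qdp_valid N f \<Longrightarrow> finite {jet m | m. f m e h \<noteq> 0}"
  unfolding qdp_valid_def by blast

lemma qdp_validI:
  assumes "\<And>m e h x. f m e h \<noteq> 0 \<Longrightarrow> x \<in> Poly_Mapping.keys m \<Longrightarrow> 1 \<le> fst x \<and> fst x \<le> N"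
    and "\<And>e h. finite {jet m | m. f m e h \<noteq> 0}"
  shows "qdp_valid N f"
  unfolding qdp_valid_def using assms by blast

lemma qdp_valid_du:
  assumes v: "qdp_valid N f"
  shows "qdp_valid N (du a i f)"
proof (rule qdp_validI)
  fix m e h x assume nz: "du a i f m e h \<noteq> 0" and x: "x \<in> Poly_Mapping.keys m"
  have fnz: "f (m + Poly_Mapping.single (a,i) 1) e h \<noteq> 0" using nz unfolding du_def by auto
  have "x \<in> Poly_Mapping.keys (m + Poly_Mapping.single (a,i) 1)" using x by simp
  then show "1 \<le> fst x \<and> fst x \<le> N" by (rule qdp_valid_keysD[OF v fnz])
next
  fix e h
  let ?F = "\<lambda>g x. g x - (if x = (a,i) \<and> 0 < i then 1 else 0)"
  have "{jet m | m. du a i f m e h \<noteq> 0} \<subseteq> ?F ` {jet m | m. f m e h \<noteq> 0}"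
  proof
    fix g assume "g \<in> {jet m | m. du a i f m e h \<noteq> 0}"
    then obtain m where ge: "g = jet m" and nz: "du a i f m e h \<noteq> 0" by blast
    have fnz: "f (m + Poly_Mapping.single (a,i) 1) e h \<noteq> 0" using nz unfolding du_def by auto
    have "jet m = ?F (jet (m + Poly_Mapping.single (a,i) 1))"
      by (rule ext) (auto simp: jet_def lookup_add lookup_single when_def split: prod.splits)
    then show "g \<in> ?F ` {jet m | m. f m e h \<noteq> 0}" using ge fnz by blast
  qed
  then show "finite {jet m | m. du a i f m e h \<noteq> 0}"
    by (rule finite_subset) (rule finite_imageI[OF qdp_valid_finite_jets[OF v]])
qed

lemma qdp_valid_dx:
  assumes v: "qdp_valid N g"
  shows "qdp_valid N (dx g)"
proof (rule qdp_validI)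
  fix m e h x assume nz: "dx g m e h \<noteq> 0" and x: "x \<in> Poly_Mapping.keys m"
  obtain a k where gnz: "g (m - Poly_Mapping.single (a, Suc k) 1 + Poly_Mapping.single (a,k) 1) e h \<noteq> 0"
    using dx_nonzeroD[OF nz] by blast
  have "(a,k) \<in> Poly_Mapping.keys (m - Poly_Mapping.single (a, Suc k) 1 + Poly_Mapping.single (a,k) 1)"
    by (simp add: in_keys_iff lookup_add)
  with qdp_valid_keysD[OF v gnz] x keys_dx_shift[of m a k] show "1 \<le> fst x \<and> fst x \<le> N"
    by fastforce
next
  fix e h
  let ?B = "jet_bound g e h"
  let ?F = "\<lambda>(g0, a, k) x. g0 x - (if x = (a,k) \<and> 0 < k then 1 else 0) + (if x = (a, Suc k) then 1 else 0)"
  let ?D = "{jet m | m. g m e h \<noteq> 0} \<times> {1..N} \<times> {..?B}"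
  have "{jet m | m. dx g m e h \<noteq> 0} \<subseteq> ?F ` ?D"
  proof
    fix j0 assume "j0 \<in> {jet m | m. dx g m e h \<noteq> 0}"
    then obtain m where je: "j0 = jet m" and nz: "dx g m e h \<noteq> 0" by blast
    obtain a k where k: "(a, Suc k) \<in> Poly_Mapping.keys m"
      and gnz: "g (m - Poly_Mapping.single (a, Suc k) 1 + Poly_Mapping.single (a,k) 1) e h \<noteq> 0"
      using dx_nonzeroD[OF nz] by blast
    let ?m' = "m - Poly_Mapping.single (a, Suc k) 1 + Poly_Mapping.single (a,k) 1"
    have ak: "(a,k) \<in> Poly_Mapping.keys ?m'" by (simp add: in_keys_iff lookup_add)
    have aN: "a \<in> {1..N}" using qdp_valid_keysD[OF v gnz ak] by simp
    have kB: "k \<in> {..?B}" using jet_bound_ge[OF v gnz ak] by simp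
    have mk: "Poly_Mapping.lookup m (a, Suc k) \<noteq> 0" using k by (simp add: in_keys_iff)
    have "jet m = ?F (jet ?m', a, k)"
      using mk by (intro ext) (auto simp: jet_def lookup_add lookup_minus lookup_single when_def split: prod.splits)
    then show "j0 \<in> ?F ` ?D" using je gnz aN kB by blast
  qed
  moreover have "finite ?D" using qdp_valid_finite_jets[OF v] by simp
  ultimately show "finite {jet m | m. dx g m e h \<noteq> 0}"
    by (rule finite_subset[OF _ finite_imageI])
qed

lemma qdp_valid_dx_power: "qdp_valid N g \<Longrightarrow> qdp_valid N ((dx ^^ i) g)"
  by (induction i) (auto intro: qdp_valid_dx)

lemma qdp_valid_cmult:
  assumes v: "qdp_valid N g"
  shows "qdp_valid N (\<lambda>m e h. c * g m e h)"
proof (rule qdp_validI)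
  fix m e h x assume a: "c * g m e h \<noteq> 0" "x \<in> Poly_Mapping.keys m"
  then have "g m e h \<noteq> 0" by simp
  then show "1 \<le> fst x \<and> fst x \<le> N" using qdp_valid_keysD[OF v _ a(2)] by blast
next
  fix e h
  have "{jet m | m. c * g m e h \<noteq> 0} \<subseteq> {jet m | m. g m e h \<noteq> 0}" by auto
  then show "finite {jet m | m. c * g m e h \<noteq> 0}" by (rule finite_subset) (rule qdp_valid_finite_jets[OF v])
qed

lemma qdp_valid_sum:
  fixes I :: "nat \<Rightarrow> nat \<Rightarrow> nat"
  assumes v: "\<And>i. qdp_valid N (G i)"
  shows "qdp_valid N (\<lambda>m e h. \<Sum>i\<le>I e h. G i m e h)"
proof (rule qdp_validI)
  fix m e h x assume nz: "(\<Sum>i\<le>I e h. G i m e h) \<noteq> 0" and x: "x \<in> Poly_Mapping.keys m"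
  obtain i where "G i m e h \<noteq> 0" using nz by (meson sum.neutral)
  then show "1 \<le> fst x \<and> fst x \<le> N" using qdp_valid_keysD[OF v _ x] by blast
next
  fix e h
  have "{jet m | m. (\<Sum>i\<le>I e h. G i m e h) \<noteq> 0} \<subseteq> (\<Union>i\<le>I e h. {jet m | m. G i m e h \<noteq> 0})"
  proof
    fix g assume "g \<in> {jet m | m. (\<Sum>i\<le>I e h. G i m e h) \<noteq> 0}"
    then obtain m where ge: "g = jet m" and nz: "(\<Sum>i\<le>I e h. G i m e h) \<noteq> 0" by blast
    obtain i where "i \<in> {..I e h}" "G i m e h \<noteq> 0" using nz by (meson sum.neutral)
    then show "g \<in> (\<Union>i\<le>I e h. {jet m | m. G i m e h \<noteq> 0})" using ge by blast
  qed
  moreover have "finite (\<Union>i\<le>I e h. {jet m | m. G i m e h \<noteq> 0})"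
    by (rule finite_UN_I) (simp_all add: qdp_valid_finite_jets[OF v])
  ultimately show "finite {jet m | m. (\<Sum>i\<le>I e h. G i m e h) \<noteq> 0}" by (rule finite_subset)
qed

lemma qdp_valid_add:
  assumes v: "qdp_valid N f" "qdp_valid N g"
  shows "qdp_valid N (\<lambda>m e h. f m e h + g m e h)"
proof (rule qdp_validI)
  fix m e h x assume nz: "f m e h + g m e h \<noteq> 0" and x: "x \<in> Poly_Mapping.keys m"
  then have "f m e h \<noteq> 0 \<or> g m e h \<noteq> 0" by auto
  then show "1 \<le> fst x \<and> fst x \<le> N" using qdp_valid_keysD[OF v(1) _ x] qdp_valid_keysD[OF v(2) _ x] by blast
next
  fix e h
  have "{jet m | m. f m e h + g m e h \<noteq> 0} \<subseteq> {jet m | m. f m e h \<noteq> 0} \<union> {jet m | m. g m e h \<noteq> 0}" by force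
  then show "finite {jet m | m. f m e h + g m e h \<noteq> 0}"
    by (rule finite_subset) (simp add: qdp_valid_finite_jets[OF v(1)] qdp_valid_finite_jets[OF v(2)])
qed

lemma du_beyond_jet_bound:
  assumes v: "qdp_valid N f" and i: "jet_bound f e h < i"
  shows "du mu i f m e h = 0"
proof (rule ccontr)
  assume "du mu i f m e h \<noteq> 0"
  then have fnz: "f (m + Poly_Mapping.single (mu,i) 1) e h \<noteq> 0" unfolding du_def by auto
  have "(mu,i) \<in> Poly_Mapping.keys (m + Poly_Mapping.single (mu,i) 1)" by simp
  then have "snd (mu,i) \<le> jet_bound f e h" by (rule jet_bound_ge[OF v fnz])
  then show False using i by simp
qed

lemma vard_eq_sum_jet_bound:
  assumes v: "qdp_valid N f"
  shows "vard mu f m e h = (\<Sum>i\<le>jet_bound f e h. (-1) ^ i * (dx ^^ i) (du mu i f) m e h)"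
proof -
  let ?t = "\<lambda>i. (-1) ^ i * (dx ^^ i) (du mu i f) m e h :: complex"
  let ?M = "max (jetdeg m) (jet_bound f e h)"
  have z1: "?t i = 0" if "jetdeg m < i" for i using dx_power_vanish[OF that] by simp
  have z2: "?t i = 0" if "jet_bound f e h < i" for i
    using dx_power_zero[of "du mu i f" e h i m] du_beyond_jet_bound[OF v that] by simp
  have "vard mu f m e h = (\<Sum>i\<le>jetdeg m. ?t i)" unfolding vard_def by simp
  also have "\<dots> = (\<Sum>i\<le>?M. ?t i)"
  proof (rule sum.mono_neutral_left)
    show "\<forall>i\<in>{..?M} - {..jetdeg m}. ?t i = 0" using z1 by auto
  qed auto
  also have "\<dots> = (\<Sum>i\<le>jet_bound f e h. ?t i)"
  proof (rule sum.mono_neutral_right)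
    show "\<forall>i\<in>{..?M} - {..jet_bound f e h}. ?t i = 0" using z2 by auto
  qed auto
  finally show ?thesis .
qed

lemma vard_eq_sum_jet_bound_fun:
  assumes v: "qdp_valid N f"
  shows "vard mu f = (\<lambda>m e h. \<Sum>i\<le>jet_bound f e h. (-1) ^ i * (dx ^^ i) (du mu i f) m e h)"
  using vard_eq_sum_jet_bound[OF v] by (intro ext) simp

lemma qdp_valid_vard:
  assumes v: "qdp_valid N f"
  shows "qdp_valid N (vard mu f)"
  unfolding vard_eq_sum_jet_bound_fun[OF v]
  by (rule qdp_valid_sum, rule qdp_valid_cmult, rule qdp_valid_dx_power, rule qdp_valid_du[OF v])

lemma dx_power_nonzeroD: "(dx ^^ i) g m e h \<noteq> 0 \<Longrightarrow> \<exists>m'. g m' e h \<noteq> 0 \<and> jetdeg m' + i = jetdeg m"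
proof (induction i arbitrary: m)
  case 0 then show ?case by auto
next
  case (Suc i)
  then have "dx ((dx ^^ i) g) m e h \<noteq> 0" by simp
  then obtain a k where k: "(a, Suc k) \<in> Poly_Mapping.keys m"
    and nz: "(dx ^^ i) g (m - Poly_Mapping.single (a, Suc k) 1 + Poly_Mapping.single (a,k) 1) e h \<noteq> 0"
    using dx_nonzeroD by blast
  obtain m' where "g m' e h \<noteq> 0" "jetdeg m' + i = jetdeg (m - Poly_Mapping.single (a, Suc k) 1 + Poly_Mapping.single (a,k) 1)"
    using Suc.IH[OF nz] by blast
  moreover have "jetdeg (m - Poly_Mapping.single (a, Suc k) 1 + Poly_Mapping.single (a,k) 1) + 1 = jetdeg m"
    by (rule jetdeg_dx_shift[OF k])
  ultimately show ?case by (intro exI[of _ m']) simp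
qed

lemma deg_le0_vard:
  assumes v: "qdp_valid N f" and d: "deg_le0 f"
  shows "deg_le0 (vard mu f)"
  unfolding deg_le0_def
proof (intro allI impI)
  fix m e h assume nz: "vard mu f m e h \<noteq> 0"
  then obtain i where "(-1) ^ i * (dx ^^ i) (du mu i f) m e h \<noteq> (0::complex)"
    unfolding vard_def by (meson sum.neutral)
  then have "(dx ^^ i) (du mu i f) m e h \<noteq> 0" by simp
  then obtain m' where m': "du mu i f m' e h \<noteq> 0" "jetdeg m' + i = jetdeg m" using dx_power_nonzeroD by blast
  then have "f (m' + Poly_Mapping.single (mu,i) 1) e h \<noteq> 0" unfolding du_def by auto
  then have "jetdeg (m' + Poly_Mapping.single (mu,i) 1) \<le> e + 2 * h" using d unfolding deg_le0_def by blast
  then show "jetdeg m \<le> e + 2 * h" using m'(2) by (simp only: jetdeg_add_single snd_conv)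
qed

section \<open>The Fourier transform\<close>

text \<open>The summation data of the Fourier image: c (a, j, k) is the number of factors u^a_j that are
  expanded into the mode p^a_k, and distributes m c P says that these factors make up the
  u-monomial m and the resulting p-monomial P.\<close>

type_synonym distr = "(nat \<times> nat \<times> int) \<Rightarrow>\<^sub>0 nat"

definition count_u :: "distr \<Rightarrow> nat \<Rightarrow> nat \<Rightarrow> nat" where
  "count_u c a j = (\<Sum>k\<in>{k. (a,j,k) \<in> Poly_Mapping.keys c}. Poly_Mapping.lookup c (a,j,k))"

definition count_p :: "distr \<Rightarrow> nat \<Rightarrow> int \<Rightarrow> nat" where
  "count_p c a k = (\<Sum>j\<in>{j. (a,j,k) \<in> Poly_Mapping.keys c}. Poly_Mapping.lookup c (a,j,k))"

definition distributes :: "umon \<Rightarrow> distr \<Rightarrow> pmon \<Rightarrow> bool" where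
  "distributes m c P \<longleftrightarrow> (\<forall>a j. Poly_Mapping.lookup m (a,j) = count_u c a j) \<and> (\<forall>a k. Poly_Mapping.lookup P (a,k) = count_p c a k)"

definition mode_factor :: "nat \<times> nat \<times> int \<Rightarrow> complex" where
  "mode_factor x = (case x of (a,j,k) \<Rightarrow> (\<i> * of_int k) ^ j)"

definition distr_weight :: "umon \<Rightarrow> distr \<Rightarrow> complex" where
  "distr_weight m c = pfact m / pfact c * (\<Prod>x\<in>Poly_Mapping.keys c. mode_factor x ^ Poly_Mapping.lookup c x)"

definition fourier_term :: "qdp \<Rightarrow> pmon \<Rightarrow> nat \<Rightarrow> nat \<Rightarrow> umon \<times> distr \<Rightarrow> complex" where
  "fourier_term f P e h = (\<lambda>(m,c). if distributes m c P then f m e h * distr_weight m c else 0)"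

lemma fourier_eq_fsum_fourier_term: "fourier f P e h = fsum (fourier_term f P e h)"
proof -
  have eq: "(\<Prod>x\<in>Poly_Mapping.keys c. (case x of (a,j,k) \<Rightarrow> (\<i> * of_int k) ^ (j * Poly_Mapping.lookup c x)))
      = (\<Prod>x\<in>Poly_Mapping.keys c. mode_factor x ^ Poly_Mapping.lookup c x)" for c :: distr
    by (rule prod.cong) (auto simp: mode_factor_def power_mult split: prod.splits)
  show ?thesis
    unfolding fourier_def fourier_term_def distributes_def distr_weight_def count_u_def count_p_def eq
    by (simp only: times_divide_eq_left times_divide_eq_right mult.assoc)
qed

lemma finite_distr_degrees: "finite {j. (a,j,k) \<in> Poly_Mapping.keys (c::distr)}"
  by (rule finite_subset[of _ "(\<lambda>x. fst (snd x)) ` Poly_Mapping.keys c"]) (force, simp)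

lemma finite_distr_modes: "finite {k. (a,j,k) \<in> Poly_Mapping.keys (c::distr)}"
  by (rule finite_subset[of _ "(\<lambda>x. snd (snd x)) ` Poly_Mapping.keys c"]) (force, simp)

lemma count_u_superset: "finite S \<Longrightarrow> {k. (a,j,k) \<in> Poly_Mapping.keys c} \<subseteq> S \<Longrightarrow>
   count_u c a j = (\<Sum>k\<in>S. Poly_Mapping.lookup c (a,j,k))"
  unfolding count_u_def by (rule sum.mono_neutral_left) (auto simp: in_keys_iff)

lemma count_p_superset: "finite S \<Longrightarrow> {j. (a,j,k) \<in> Poly_Mapping.keys c} \<subseteq> S \<Longrightarrow>
   count_p c a k = (\<Sum>j\<in>S. Poly_Mapping.lookup c (a,j,k))"
  unfolding count_p_def by (rule sum.mono_neutral_left) (auto simp: in_keys_iff)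

lemma lookup_le_count_u: "Poly_Mapping.lookup c (a,j,k) \<le> count_u c a j"
proof (cases "(a,j,k) \<in> Poly_Mapping.keys c")
  case True then show ?thesis unfolding count_u_def by (intro member_le_sum finite_distr_modes) auto
next
  case False then show ?thesis by (simp add: in_keys_iff)
qed

lemma lookup_le_count_p: "Poly_Mapping.lookup c (a,j,k) \<le> count_p c a k"
proof (cases "(a,j,k) \<in> Poly_Mapping.keys c")
  case True then show ?thesis unfolding count_p_def by (intro member_le_sum finite_distr_degrees) auto
next
  case False then show ?thesis by (simp add: in_keys_iff)
qed

lemma count_u_add_single: "count_u (c + Poly_Mapping.single y 1) a j = count_u c a j + (if (a,j) = (fst y, fst (snd y)) then 1 else 0)"
proof -
  obtain a0 j0 k0 where ye: "y = (a0,j0,k0)" by (cases y) auto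
  let ?S = "insert k0 {k. (a,j,k) \<in> Poly_Mapping.keys c}"
  have fS: "finite ?S" using finite_distr_modes by simp
  have "count_u (c + Poly_Mapping.single y 1) a j = (\<Sum>k\<in>?S. Poly_Mapping.lookup (c + Poly_Mapping.single y 1) (a,j,k))"
    by (rule count_u_superset[OF fS]) (auto simp: ye)
  also have "\<dots> = (\<Sum>k\<in>?S. Poly_Mapping.lookup c (a,j,k)) + (\<Sum>k\<in>?S. if (a,j,k) = y then 1 else 0)"
    by (simp only: lookup_add_single sum.distrib)
  also have "(\<Sum>k\<in>?S. Poly_Mapping.lookup c (a,j,k)) = count_u c a j"
    by (rule count_u_superset[symmetric, OF fS]) auto
  also have "(\<Sum>k\<in>?S. if (a,j,k) = y then 1 else 0) = (if (a,j) = (fst y, fst (snd y)) then 1 else (0::nat))"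
  proof (cases "(a,j) = (a0,j0)")
    case True
    then have "(\<Sum>k\<in>?S. if (a,j,k) = y then 1 else (0::nat)) = (\<Sum>k\<in>?S. if k = k0 then 1 else 0)"
      by (intro sum.cong) (auto simp: ye)
    also have "\<dots> = 1" using fS by simp
    finally show ?thesis using True ye by simp
  next
    case False
    then have "(\<Sum>k\<in>?S. if (a,j,k) = y then 1 else (0::nat)) = (\<Sum>k\<in>?S. 0)"
      by (intro sum.cong) (auto simp: ye)
    then show ?thesis using False ye by simp
  qed
  finally show ?thesis .
qed

lemma count_p_add_single: "count_p (c + Poly_Mapping.single y 1) a k = count_p c a k + (if (a,k) = (fst y, snd (snd y)) then 1 else 0)"
proof -
  obtain a0 j0 k0 where ye: "y = (a0,j0,k0)" by (cases y) auto
  let ?S = "insert j0 {j. (a,j,k) \<in> Poly_Mapping.keys c}"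
  have fS: "finite ?S" using finite_distr_degrees by simp
  have "count_p (c + Poly_Mapping.single y 1) a k = (\<Sum>j\<in>?S. Poly_Mapping.lookup (c + Poly_Mapping.single y 1) (a,j,k))"
    by (rule count_p_superset[OF fS]) (auto simp: ye)
  also have "\<dots> = (\<Sum>j\<in>?S. Poly_Mapping.lookup c (a,j,k)) + (\<Sum>j\<in>?S. if (a,j,k) = y then 1 else 0)"
    by (simp only: lookup_add_single sum.distrib)
  also have "(\<Sum>j\<in>?S. Poly_Mapping.lookup c (a,j,k)) = count_p c a k"
    by (rule count_p_superset[symmetric, OF fS]) auto
  also have "(\<Sum>j\<in>?S. if (a,j,k) = y then 1 else 0) = (if (a,k) = (fst y, snd (snd y)) then 1 else (0::nat))"
  proof (cases "(a,k) = (a0,k0)")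
    case True
    then have "(\<Sum>j\<in>?S. if (a,j,k) = y then 1 else (0::nat)) = (\<Sum>j\<in>?S. if j = j0 then 1 else 0)"
      by (intro sum.cong) (auto simp: ye)
    also have "\<dots> = 1" using fS by simp
    finally show ?thesis using True ye by simp
  next
    case False
    then have "(\<Sum>j\<in>?S. if (a,j,k) = y then 1 else (0::nat)) = (\<Sum>j\<in>?S. 0)"
      by (intro sum.cong) (auto simp: ye)
    then show ?thesis using False ye by simp
  qed
  finally show ?thesis .
qed

definition distr_source :: "distr \<Rightarrow> umon" where
  "distr_source c = (THE m. \<forall>a j. Poly_Mapping.lookup m (a,j) = count_u c a j)"

lemma distributes_source: "distributes m c P \<Longrightarrow> m = distr_source c"
  unfolding distr_source_def distributes_def
  by (rule the_equality[symmetric]) (auto intro!: poly_mapping_eqI)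

lemma distributes_lookup_le:
  assumes "distributes m c P"
  shows "Poly_Mapping.lookup c (a,j,k) \<le> Poly_Mapping.lookup P (a,k)"
    "Poly_Mapping.lookup c (a,j,k) \<le> Poly_Mapping.lookup m (a,j)"
  using assms lookup_le_count_u lookup_le_count_p unfolding distributes_def by metis+

lemma finite_distributions: "finite {(m,c). distributes m c P \<and> (\<forall>x\<in>Poly_Mapping.keys m. snd x \<le> I)}"
proof -
  let ?KS = "(\<lambda>((a,k),j). (a,j,k)) ` (Poly_Mapping.keys P \<times> {..I})"
  let ?C = "{c :: distr. Poly_Mapping.keys c \<subseteq> ?KS \<and> (\<forall>x. Poly_Mapping.lookup c x \<le> max_lookup P)}"
  have fC: "finite ?C" by (rule finite_bounded_poly_mappings) simp
  have "{(m,c). distributes m c P \<and> (\<forall>x\<in>Poly_Mapping.keys m. snd x \<le> I)} \<subseteq> (\<lambda>c. (distr_source c, c)) ` ?C"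
  proof
    fix z assume "z \<in> {(m,c). distributes m c P \<and> (\<forall>x\<in>Poly_Mapping.keys m. snd x \<le> I)}"
    then obtain m c where ze: "z = (m,c)" and fc: "distributes m c P" and km: "\<forall>x\<in>Poly_Mapping.keys m. snd x \<le> I"
      by auto
    have kc: "Poly_Mapping.keys c \<subseteq> ?KS"
    proof
      fix x assume x: "x \<in> Poly_Mapping.keys c"
      obtain a j k where xe: "x = (a,j,k)" by (cases x) auto
      have nz: "Poly_Mapping.lookup c (a,j,k) \<noteq> 0" using x xe by (simp add: in_keys_iff)
      have "Poly_Mapping.lookup P (a,k) \<noteq> 0" using distributes_lookup_le(1)[OF fc, of a j k] nz by linarith
      then have "(a,k) \<in> Poly_Mapping.keys P" by (simp add: in_keys_iff)
      moreover have "Poly_Mapping.lookup m (a,j) \<noteq> 0" using distributes_lookup_le(2)[OF fc, of a j k] nz by linarith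
      then have "(a,j) \<in> Poly_Mapping.keys m" by (simp add: in_keys_iff)
      then have "j \<le> I" using km by fastforce
      ultimately show "x \<in> ?KS" unfolding xe by (auto intro!: image_eqI[where x="((a,k),j)"])
    qed
    have vc: "\<forall>x. Poly_Mapping.lookup c x \<le> max_lookup P"
    proof
      fix x :: "nat \<times> nat \<times> int" obtain a j k where xe: "x = (a,j,k)" by (cases x) auto
      show "Poly_Mapping.lookup c x \<le> max_lookup P" unfolding xe
        using distributes_lookup_le(1)[OF fc, of a j k] max_lookup_ge[of P "(a,k)"] by linarith
    qed
    have "z = (distr_source c, c)" using ze distributes_source[OF fc] by simp
    then show "z \<in> (\<lambda>c. (distr_source c, c)) ` ?C" using kc vc by blast
  qed
  then show ?thesis by (rule finite_subset) (rule finite_imageI[OF fC])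
qed

lemma finite_distributions_subset:
  assumes "\<And>m c. (m,c) \<in> Z \<Longrightarrow> distributes m c P \<and> (\<forall>x\<in>Poly_Mapping.keys m. snd x \<le> I)"
  shows "finite Z"
  by (rule finite_subset[OF _ finite_distributions[of P I]]) (use assms in auto)

lemma distributes_add_single:
  "distributes (m + Poly_Mapping.single (a0,j0) 1) (c + Poly_Mapping.single (a0,j0,k0) 1) (P + Poly_Mapping.single (a0,k0) 1) \<longleftrightarrow> distributes m c P"
  unfolding distributes_def by (simp only: count_u_add_single count_p_add_single lookup_add_single) simp

lemma distr_weight_add_single:
  "distr_weight (m + Poly_Mapping.single (a0,j0) 1) (c + Poly_Mapping.single (a0,j0,k0) 1) =
    of_nat (Poly_Mapping.lookup m (a0,j0) + 1) * pfact m / (of_nat (Poly_Mapping.lookup c (a0,j0,k0) + 1) * pfact c)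
    * (mode_factor (a0,j0,k0) * (\<Prod>x\<in>Poly_Mapping.keys c. mode_factor x ^ Poly_Mapping.lookup c x))"
  unfolding distr_weight_def by (simp only: pfact_add_single prod_power_add_single)

definition add_factor :: "nat \<Rightarrow> nat \<Rightarrow> int \<Rightarrow> umon \<times> distr \<Rightarrow> umon \<times> distr" where
  "add_factor mu j l = (\<lambda>(m,c). (m + Poly_Mapping.single (mu,j) 1, c + Poly_Mapping.single (mu,j,l) 1))"

lemma inj_add_factor: "inj (add_factor mu j l)"
  by (rule injI) (auto simp: add_factor_def split: prod.splits)

lemma fourier_term_add_factor:
  "of_nat (Poly_Mapping.lookup (snd (add_factor mu j l z)) (mu,j,l)) * fourier_term f (P + Poly_Mapping.single (mu,l) 1) e h (add_factor mu j l z)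
    = (\<i> * of_int l) ^ j * fourier_term (du mu j f) P e h z"
proof -
  obtain m c where ze: "z = (m,c)" by (cases z) auto
  have nz: "(of_nat (Poly_Mapping.lookup c (mu,j,l) + 1) :: complex) \<noteq> 0" by (simp only: of_nat_eq_0_iff)
  have l1: "Poly_Mapping.lookup (c + Poly_Mapping.single (mu,j,l) 1) (mu,j,l) = Poly_Mapping.lookup c (mu,j,l) + 1"
    by (simp add: lookup_add)
  have cancel: "c1 * (f * (m1 * pm / (c1 * pc) * (w * Pi))) = w * (m1 * f * (pm / pc * Pi))"
    if "c1 \<noteq> 0" "pc \<noteq> 0" for c1 pc f m1 pm w Pi :: complex
    using that by (simp add: field_simps)
  show ?thesis
  proof (cases "distributes m c P")
    case True
    then show ?thesis
      unfolding ze add_factor_def fourier_term_def du_def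
      by (simp only: prod.case snd_conv distributes_add_single distr_weight_add_single l1 if_True
          cancel[OF nz pfact_nonzero]) (simp add: mode_factor_def distr_weight_def)
  next
    case False
    then show ?thesis
      unfolding ze add_factor_def fourier_term_def
      by (simp only: prod.case snd_conv distributes_add_single if_False) simp
  qed
qed

lemma fourier_term_nonzeroD:
  "fourier_term f P e h (m,c) \<noteq> 0 \<Longrightarrow> distributes m c P \<and> f m e h \<noteq> 0"
  unfolding fourier_term_def by (auto split: if_splits)

lemma finite_fourier_term_support:
  assumes bounded: "\<forall>m. f m e h \<noteq> 0 \<longrightarrow> (\<forall>x\<in>Poly_Mapping.keys m. snd x \<le> I)"
  shows "finite {z. fourier_term f P e h z \<noteq> 0}"
  by (rule finite_distributions_subset[where I=I]) (use fourier_term_nonzeroD bounded in fastforce)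

lemma distributes_lookup_eq_sum:
  assumes fc: "distributes m c P" and bounded: "\<forall>x\<in>Poly_Mapping.keys m. snd x \<le> I"
  shows "Poly_Mapping.lookup P (mu,l) = (\<Sum>j\<le>I. Poly_Mapping.lookup c (mu,j,l))"
proof -
  have "Poly_Mapping.lookup P (mu,l) = count_p c mu l" using fc unfolding distributes_def by blast
  also have "\<dots> = (\<Sum>j\<le>I. Poly_Mapping.lookup c (mu,j,l))"
  proof (rule count_p_superset)
    show "{j. (mu, j, l) \<in> Poly_Mapping.keys c} \<subseteq> {..I}"
    proof
      fix j assume "j \<in> {j. (mu, j, l) \<in> Poly_Mapping.keys c}"
      then have "Poly_Mapping.lookup c (mu,j,l) \<noteq> 0" by (simp add: in_keys_iff)
      then have "Poly_Mapping.lookup m (mu,j) \<noteq> 0" using distributes_lookup_le(2)[OF fc, of mu j l] by linarith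
      then have "(mu,j) \<in> Poly_Mapping.keys m" by (simp add: in_keys_iff)
      then show "j \<in> {..I}" using bounded by fastforce
    qed
  qed simp
  finally show ?thesis .
qed

lemma range_add_factor:
  assumes "distributes m c P" "Poly_Mapping.lookup c (mu,j,l) \<noteq> 0"
  shows "(m,c) \<in> range (add_factor mu j l)"
proof -
  have "Poly_Mapping.lookup m (mu,j) \<noteq> 0" using assms distributes_lookup_le(2)[OF assms(1), of mu j l] by linarith
  then have "(m,c) = add_factor mu j l (m - Poly_Mapping.single (mu,j) 1, c - Poly_Mapping.single (mu,j,l) 1)"
    unfolding add_factor_def
    using poly_mapping_remove_single[OF assms(2)] poly_mapping_remove_single[of m "(mu,j)"] by simp
  then show ?thesis by blast
qed

lemma fsum_lookup_fourier_term:
  "fsum (\<lambda>z. of_nat (Poly_Mapping.lookup (snd z) (mu,j,l)) * fourier_term f (P + Poly_Mapping.single (mu,l) 1) e h z)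
     = (\<i> * of_int l) ^ j * fourier (du mu j f) P e h"
proof -
  let ?g = "\<lambda>z. of_nat (Poly_Mapping.lookup (snd z) (mu,j,l)) * fourier_term f (P + Poly_Mapping.single (mu,l) 1) e h z"
  have "fsum ?g = fsum (\<lambda>z. ?g (add_factor mu j l z))"
  proof (rule fsum_reindex[symmetric, OF inj_add_factor], rule subsetI)
    fix z :: "umon \<times> distr" assume "z \<in> {z. ?g z \<noteq> 0}"
    then show "z \<in> range (add_factor mu j l)"
      by (cases z) (auto dest: fourier_term_nonzeroD intro: range_add_factor)
  qed
  also have "\<dots> = fsum (\<lambda>z. (\<i> * of_int l) ^ j * fourier_term (du mu j f) P e h z)"
    by (simp only: fourier_term_add_factor)
  also have "\<dots> = (\<i> * of_int l) ^ j * fourier (du mu j f) P e h"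
    by (simp only: fsum_cmult fourier_eq_fsum_fourier_term)
  finally show ?thesis .
qed

text \<open>The chain rule for u^mu_j = sum_l (il)^j p^mu_l.\<close>

lemma fourier_add_single:
  assumes bounded: "\<forall>m. f m e h \<noteq> 0 \<longrightarrow> (\<forall>x\<in>Poly_Mapping.keys m. snd x \<le> I)"
  shows "of_nat (Poly_Mapping.lookup P (mu,l) + 1) * fourier f (P + Poly_Mapping.single (mu,l) 1) e h
     = (\<Sum>j\<le>I. (\<i> * of_int l) ^ j * fourier (du mu j f) P e h)"
proof -
  let ?P' = "P + Poly_Mapping.single (mu,l) 1"
  let ?g = "fourier_term f ?P' e h"
  let ?w = "\<lambda>j z. of_nat (Poly_Mapping.lookup (snd z) (mu,j,l)) :: complex"
  have fin: "finite {z. ?g z \<noteq> 0}" by (rule finite_fourier_term_support[where f=f and e=e and h=h, OF bounded])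
  have split: "of_nat (Poly_Mapping.lookup P (mu,l) + 1) * ?g z = (\<Sum>j\<le>I. ?w j z * ?g z)" for z
  proof (cases "?g z = 0")
    case False
    obtain m c where ze: "z = (m,c)" by (cases z) auto
    have fc: "distributes m c ?P'" and "f m e h \<noteq> 0" using fourier_term_nonzeroD False ze by blast+
    with bounded have "Poly_Mapping.lookup ?P' (mu,l) = (\<Sum>j\<le>I. Poly_Mapping.lookup c (mu,j,l))"
      by (intro distributes_lookup_eq_sum) blast+
    then have "(of_nat (Poly_Mapping.lookup P (mu,l) + 1) :: complex) = (\<Sum>j\<le>I. ?w j z)"
      unfolding ze by (simp add: lookup_add flip: of_nat_sum)
    then show ?thesis by (simp add: sum_distrib_right)
  qed simp
  have "of_nat (Poly_Mapping.lookup P (mu,l) + 1) * fourier f ?P' e h = fsum (\<lambda>z. \<Sum>j\<le>I. ?w j z * ?g z)"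
    by (simp only: fourier_eq_fsum_fourier_term flip: fsum_cmult split)
  also have "\<dots> = (\<Sum>j\<le>I. fsum (\<lambda>z. ?w j z * ?g z))"
    by (rule fsum_sum) (auto intro: finite_subset[OF _ fin])
  also have "\<dots> = (\<Sum>j\<le>I. (\<i> * of_int l) ^ j * fourier (du mu j f) P e h)"
    by (simp only: fsum_lookup_fourier_term)
  finally show ?thesis .
qed

definition lowered_keys :: "distr \<Rightarrow> (nat \<times> nat \<times> int) set" where
  "lowered_keys c = {(a,j,k). (a, Suc j, k) \<in> Poly_Mapping.keys c}"

lemma finite_lowered_keys: "finite (lowered_keys c)"
  by (rule finite_subset[of _ "(\<lambda>(a,j,k). (a, j - 1, k)) ` Poly_Mapping.keys c"])
     (auto simp: lowered_keys_def image_iff intro!: bexI[where x="(_, Suc _, _)"])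

definition dx_share :: "qdp \<Rightarrow> nat \<Rightarrow> nat \<Rightarrow> umon \<Rightarrow> distr \<Rightarrow> nat \<times> nat \<times> int \<Rightarrow> complex" where
  "dx_share g e h m c y = (case y of (a,j,k) \<Rightarrow>
     of_nat (Poly_Mapping.lookup c (a, Suc j, k)) / of_nat (Poly_Mapping.lookup m (a, Suc j)) *
     (of_nat (Poly_Mapping.lookup m (a,j) + 1) *
      g (m - Poly_Mapping.single (a, Suc j) 1 + Poly_Mapping.single (a,j) 1) e h))"

lemma sum_lookup_div_count_u:
  assumes "distributes m c P" "Poly_Mapping.lookup m (a,j) \<noteq> 0"
  shows "(\<Sum>k\<in>{k. (a,j,k) \<in> Poly_Mapping.keys c}.
           of_nat (Poly_Mapping.lookup c (a,j,k)) / of_nat (Poly_Mapping.lookup m (a,j))) = (1::complex)"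
proof -
  have "Poly_Mapping.lookup m (a,j) = (\<Sum>k\<in>{k. (a,j,k) \<in> Poly_Mapping.keys c}. Poly_Mapping.lookup c (a,j,k))"
    using assms(1) unfolding distributes_def count_u_def by blast
  then have "(of_nat (Poly_Mapping.lookup m (a,j)) :: complex)
      = (\<Sum>k\<in>{k. (a,j,k) \<in> Poly_Mapping.keys c}. of_nat (Poly_Mapping.lookup c (a,j,k)))"
    by simp
  moreover have "(of_nat (Poly_Mapping.lookup m (a,j)) :: complex) \<noteq> 0" using assms(2) by simp
  ultimately show ?thesis by (simp flip: sum_divide_distrib)
qed

lemma dx_eq_sum_dx_share:
  assumes fc: "distributes m c P"
  shows "dx g m e h = (\<Sum>y\<in>lowered_keys c. dx_share g e h m c y)"
proof -
  let ?D = "{(a,k). (a, Suc k) \<in> Poly_Mapping.keys m}"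
  let ?X = "\<lambda>x. of_nat (Poly_Mapping.lookup m x + 1) *
      g (m - Poly_Mapping.single (fst x, Suc (snd x)) 1 + Poly_Mapping.single x 1) e h"
  let ?K = "\<lambda>x. {k. (fst x, Suc (snd x), k) \<in> Poly_Mapping.keys c}"
  let ?F = "\<lambda>x k. of_nat (Poly_Mapping.lookup c (fst x, Suc (snd x), k)) / of_nat (Poly_Mapping.lookup m (fst x, Suc (snd x))) * ?X x"
  have fD: "finite ?D"
    by (rule finite_subset[of _ "(\<lambda>(a,k). (a, k - 1)) ` Poly_Mapping.keys m"])
       (auto simp: image_iff intro!: bexI[where x="(_, Suc _)"])
  have "dx g m e h = (\<Sum>x\<in>?D. ?X x)" unfolding dx_def by simp
  also have "\<dots> = (\<Sum>x\<in>?D. \<Sum>k\<in>?K x. ?F x k)"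
  proof (rule sum.cong[OF refl])
    fix x assume "x \<in> ?D"
    then have "Poly_Mapping.lookup m (fst x, Suc (snd x)) \<noteq> 0" by (auto simp: in_keys_iff)
    then have "(\<Sum>k\<in>?K x. of_nat (Poly_Mapping.lookup c (fst x, Suc (snd x), k)) / of_nat (Poly_Mapping.lookup m (fst x, Suc (snd x)))) = (1::complex)"
      by (rule sum_lookup_div_count_u[OF fc])
    then show "?X x = (\<Sum>k\<in>?K x. ?F x k)" by (simp only: sum_distrib_right[symmetric] mult_1_left)
  qed
  also have "\<dots> = (\<Sum>(x,k)\<in>Sigma ?D ?K. ?F x k)"
    by (rule sum.Sigma[OF fD]) (auto intro: finite_distr_modes)
  also have "\<dots> = (\<Sum>y\<in>lowered_keys c. dx_share g e h m c y)"
  proof (rule sum.reindex_bij_witness[where i="\<lambda>(a,j,k). ((a,j),k)" and j="\<lambda>((a,j),k). (a,j,k)"], goal_cases)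
    case (1 z)
    then show ?case by (auto split: prod.splits)
  next
    case (2 z)
    then show ?case by (auto simp: lowered_keys_def split: prod.splits)
  next
    case (3 y)
    then show ?case by (auto split: prod.splits)
  next
    case (4 y)
    obtain a j k where ye: "y = (a,j,k)" by (cases y) auto
    have cnz: "Poly_Mapping.lookup c (a, Suc j, k) \<noteq> 0" using 4 ye by (simp add: lowered_keys_def in_keys_iff)
    have "Poly_Mapping.lookup m (a, Suc j) \<noteq> 0" using distributes_lookup_le(2)[OF fc, of a "Suc j" k] cnz by linarith
    then show ?case using cnz ye by (simp add: in_keys_iff)
  next
    case (5 z)
    then show ?case by (auto simp: dx_share_def split: prod.splits)
  qed
  finally show ?thesis .
qed

lemma distributes_momentum:
  assumes fc: "distributes m c P"
  shows "momentum P = (\<Sum>y\<in>Poly_Mapping.keys c. snd (snd y) * int (Poly_Mapping.lookup c y))"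
proof -
  let ?pi = "\<lambda>y::nat \<times> nat \<times> int. (fst y, snd (snd y))"
  have lp: "Poly_Mapping.lookup P (a,k) = count_p c a k" for a k using fc unfolding distributes_def by blast
  have kP: "Poly_Mapping.keys P \<subseteq> ?pi ` Poly_Mapping.keys c"
  proof
    fix s assume s: "s \<in> Poly_Mapping.keys P"
    obtain a k where se: "s = (a,k)" by (cases s) auto
    have "count_p c a k \<noteq> 0" using s se lp by (simp add: in_keys_iff)
    then obtain j where "j \<in> {j. (a,j,k) \<in> Poly_Mapping.keys c}" unfolding count_p_def
      by (meson sum.neutral)
    then show "s \<in> ?pi ` Poly_Mapping.keys c" using se by (auto intro!: image_eqI[where x="(a,j,k)"])
  qed
  have "momentum P = (\<Sum>s\<in>?pi ` Poly_Mapping.keys c. snd s * int (Poly_Mapping.lookup P s))"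
    by (rule momentum_superset[OF _ kP]) simp
  also have "\<dots> = (\<Sum>s\<in>?pi ` Poly_Mapping.keys c. \<Sum>y\<in>{y\<in>Poly_Mapping.keys c. ?pi y = s}. snd (snd y) * int (Poly_Mapping.lookup c y))"
  proof (rule sum.cong[OF refl])
    fix s assume "s \<in> ?pi ` Poly_Mapping.keys c"
    obtain a k where se: "s = (a,k)" by (cases s) auto
    have "{y\<in>Poly_Mapping.keys c. ?pi y = s} = (\<lambda>j. (a,j,k)) ` {j. (a,j,k) \<in> Poly_Mapping.keys c}"
      using se by auto
    then have "(\<Sum>y\<in>{y\<in>Poly_Mapping.keys c. ?pi y = s}. snd (snd y) * int (Poly_Mapping.lookup c y))
       = (\<Sum>j\<in>{j. (a,j,k) \<in> Poly_Mapping.keys c}. k * int (Poly_Mapping.lookup c (a,j,k)))"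
      by (simp add: sum.reindex inj_on_def)
    also have "\<dots> = k * int (count_p c a k)" unfolding count_p_def by (simp add: sum_distrib_left)
    finally show "snd s * int (Poly_Mapping.lookup P s) = (\<Sum>y\<in>{y\<in>Poly_Mapping.keys c. ?pi y = s}. snd (snd y) * int (Poly_Mapping.lookup c y))"
      using se lp by simp
  qed
  also have "\<dots> = (\<Sum>y\<in>Poly_Mapping.keys c. snd (snd y) * int (Poly_Mapping.lookup c y))"
    by (rule sum.image_gen[symmetric]) simp
  finally show ?thesis .
qed

definition distributes_except :: "umon \<Rightarrow> distr \<Rightarrow> pmon \<Rightarrow> nat \<Rightarrow> int \<Rightarrow> bool" where
  "distributes_except m c P a0 k0 \<longleftrightarrow> (\<forall>a j. Poly_Mapping.lookup m (a,j) = count_u c a j) \<and>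
     (\<forall>a k. Poly_Mapping.lookup P (a,k) = count_p c a k + (if (a,k) = (a0,k0) then 1 else 0))"

lemma distributes_add_single_except:
  "distributes (m + Poly_Mapping.single (a0,j0) 1) (c + Poly_Mapping.single (a0,j0,k0) 1) P \<longleftrightarrow> distributes_except m c P a0 k0"
  unfolding distributes_def distributes_except_def by (simp only: count_u_add_single count_p_add_single lookup_add_single) simp

text \<open>Term by term, the Fourier image of d_x g sums over a distribution together with a factor
  u^a_(j+1) (in mode p^a_k) that came from differentiating u^a_j. Such a term equals the term of the
  Fourier image of g with that factor lowered to u^a_j, weighted by ik; summing the weights over
  all factors gives i times the momentum.\<close>

definition dx_term :: "qdp \<Rightarrow> nat \<Rightarrow> nat \<Rightarrow> pmon \<Rightarrow> (umon \<times> distr) \<times> (nat \<times> nat \<times> int) \<Rightarrow> complex" where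
  "dx_term g e h P = (\<lambda>((m,c),y). if y \<in> lowered_keys c then (if distributes m c P then dx_share g e h m c y * distr_weight m c else 0) else 0)"

definition weighted_term :: "qdp \<Rightarrow> nat \<Rightarrow> nat \<Rightarrow> pmon \<Rightarrow> (umon \<times> distr) \<times> (nat \<times> nat \<times> int) \<Rightarrow> complex" where
  "weighted_term g e h P = (\<lambda>((m,c),y). if y \<in> Poly_Mapping.keys c then (if distributes m c P then
      (\<i> * of_int (snd (snd y)) * of_nat (Poly_Mapping.lookup c y)) * g m e h * distr_weight m c else 0) else 0)"

definition add_index_factor_Suc :: "(umon \<times> distr) \<times> (nat \<times> nat \<times> int) \<Rightarrow> (umon \<times> distr) \<times> (nat \<times> nat \<times> int)" where
  "add_index_factor_Suc = (\<lambda>((m,c),(a,j,k)). ((m + Poly_Mapping.single (a, Suc j) 1, c + Poly_Mapping.single (a, Suc j, k) 1), (a,j,k)))"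

definition add_index_factor :: "(umon \<times> distr) \<times> (nat \<times> nat \<times> int) \<Rightarrow> (umon \<times> distr) \<times> (nat \<times> nat \<times> int)" where
  "add_index_factor = (\<lambda>((m,c),(a,j,k)). ((m + Poly_Mapping.single (a,j) 1, c + Poly_Mapping.single (a,j,k) 1), (a,j,k)))"

lemma inj_add_index_factor_Suc: "inj add_index_factor_Suc"
  by (rule injI) (auto simp: add_index_factor_Suc_def split: prod.splits)

lemma inj_add_index_factor: "inj add_index_factor"
  by (rule injI) (auto simp: add_index_factor_def split: prod.splits)

lemma dx_term_add_index_factor: "dx_term g e h P (add_index_factor_Suc w) = weighted_term g e h P (add_index_factor w)"
proof -
  obtain m0 c0 a j k where we: "w = ((m0,c0),(a,j,k))" by (metis prod.collapse)
  let ?e1 = "Poly_Mapping.single (a, Suc j) (1::nat)"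
  let ?e1' = "Poly_Mapping.single (a, Suc j, k) (1::nat)"
  let ?e0 = "Poly_Mapping.single (a, j) (1::nat)"
  let ?e0' = "Poly_Mapping.single (a, j, k) (1::nat)"
  have in_lowered: "(a,j,k) \<in> lowered_keys (c0 + ?e1')" by (simp add: lowered_keys_def)
  have in_keys_c: "(a,j,k) \<in> Poly_Mapping.keys (c0 + ?e0')" by simp
  have gm: "m0 + ?e1 - ?e1 + ?e0 = m0 + ?e0" by simp
  have l1: "Poly_Mapping.lookup (c0 + ?e1') (a, Suc j, k) = Poly_Mapping.lookup c0 (a, Suc j, k) + 1" by (simp add: lookup_add)
  have l2: "Poly_Mapping.lookup (m0 + ?e1) (a, Suc j) = Poly_Mapping.lookup m0 (a, Suc j) + 1" by (simp add: lookup_add)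
  have l3: "Poly_Mapping.lookup (m0 + ?e1) (a, j) = Poly_Mapping.lookup m0 (a, j)" by (simp add: lookup_add lookup_single)
  have l4: "Poly_Mapping.lookup (c0 + ?e0') (a, j, k) = Poly_Mapping.lookup c0 (a, j, k) + 1" by (simp add: lookup_add)
  have mode_factor_Suc: "mode_factor (a, Suc j, k) = (\<i> * of_int k) * mode_factor (a,j,k)" by (simp add: mode_factor_def)
  have nzA: "(of_nat (Poly_Mapping.lookup c0 (a, Suc j, k) + 1) :: complex) \<noteq> 0" by (simp only: of_nat_eq_0_iff)
  have nzM: "(of_nat (Poly_Mapping.lookup m0 (a, Suc j) + 1) :: complex) \<noteq> 0" by (simp only: of_nat_eq_0_iff)
  have nzC: "(of_nat (Poly_Mapping.lookup c0 (a, j, k) + 1) :: complex) \<noteq> 0" by (simp only: of_nat_eq_0_iff)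
  show ?thesis
  proof (cases "distributes_except m0 c0 P a k")
    case True
    have L: "dx_term g e h P (add_index_factor_Suc w) = of_nat (Poly_Mapping.lookup c0 (a, Suc j, k) + 1) / of_nat (Poly_Mapping.lookup m0 (a, Suc j) + 1) *
         (of_nat (Poly_Mapping.lookup m0 (a,j) + 1) * g (m0 + ?e0) e h) *
         (of_nat (Poly_Mapping.lookup m0 (a, Suc j) + 1) * pfact m0 / (of_nat (Poly_Mapping.lookup c0 (a, Suc j, k) + 1) * pfact c0)
          * ((\<i> * of_int k) * mode_factor (a,j,k) * (\<Prod>x\<in>Poly_Mapping.keys c0. mode_factor x ^ Poly_Mapping.lookup c0 x)))"
      unfolding we add_index_factor_Suc_def dx_term_def
      by (simp only: prod.case in_lowered if_True distributes_add_single_except True dx_share_def gm l1 l2 l3 distr_weight_add_single mode_factor_Suc mult.assoc)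
    have R: "weighted_term g e h P (add_index_factor w) = (\<i> * of_int k * of_nat (Poly_Mapping.lookup c0 (a, j, k) + 1)) * g (m0 + ?e0) e h *
         (of_nat (Poly_Mapping.lookup m0 (a, j) + 1) * pfact m0 / (of_nat (Poly_Mapping.lookup c0 (a, j, k) + 1) * pfact c0)
          * (mode_factor (a,j,k) * (\<Prod>x\<in>Poly_Mapping.keys c0. mode_factor x ^ Poly_Mapping.lookup c0 x)))"
      unfolding we add_index_factor_def weighted_term_def
      by (simp only: prod.case in_keys_c if_True distributes_add_single_except True l4 distr_weight_add_single snd_conv)
    have cancel: "A / M1 * (M0 * G) * (M1 * pm / (A * pc) * (w * x * Pi)) = w * C0 * G * (M0 * pm / (C0 * pc) * (x * Pi))"
      if "A \<noteq> 0" "M1 \<noteq> 0" "C0 \<noteq> 0" "pc \<noteq> 0" for A M1 C0 pc M0 G pm w x Pi :: complex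
      using that by (simp add: field_simps)
    show ?thesis unfolding L R by (rule cancel[OF nzA nzM nzC pfact_nonzero])
  next
    case False
    then show ?thesis unfolding we add_index_factor_Suc_def dx_term_def add_index_factor_def weighted_term_def
      by (simp only: prod.case distributes_add_single_except if_False if_cancel)
  qed
qed

lemma range_add_index_factor_Suc: "dx_term g e h P w \<noteq> 0 \<Longrightarrow> w \<in> range add_index_factor_Suc"
proof -
  assume nz: "dx_term g e h P w \<noteq> 0"
  obtain m c a j k where we: "w = ((m,c),(a,j,k))" by (metis prod.collapse)
  have sl: "(a,j,k) \<in> lowered_keys c" and fc: "distributes m c P" using nz unfolding we dx_term_def by (auto split: if_splits)
  have cnz: "Poly_Mapping.lookup c (a, Suc j, k) \<noteq> 0" using sl by (simp add: lowered_keys_def in_keys_iff)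
  have mnz: "Poly_Mapping.lookup m (a, Suc j) \<noteq> 0" using distributes_lookup_le(2)[OF fc, of a "Suc j" k] cnz by linarith
  have "w = add_index_factor_Suc ((m - Poly_Mapping.single (a, Suc j) 1, c - Poly_Mapping.single (a, Suc j, k) 1), (a,j,k))"
    unfolding we add_index_factor_Suc_def using poly_mapping_remove_single[OF cnz] poly_mapping_remove_single[OF mnz] by simp
  then show ?thesis by blast
qed

lemma range_add_index_factor: "weighted_term g e h P w \<noteq> 0 \<Longrightarrow> w \<in> range add_index_factor"
proof -
  assume nz: "weighted_term g e h P w \<noteq> 0"
  obtain m c a j k where we: "w = ((m,c),(a,j,k))" by (metis prod.collapse)
  have sl: "(a,j,k) \<in> Poly_Mapping.keys c" and fc: "distributes m c P" using nz unfolding we weighted_term_def by (auto split: if_splits)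
  have cnz: "Poly_Mapping.lookup c (a, j, k) \<noteq> 0" using sl by (simp add: in_keys_iff)
  have mnz: "Poly_Mapping.lookup m (a, j) \<noteq> 0" using distributes_lookup_le(2)[OF fc, of a j k] cnz by linarith
  have "w = add_index_factor ((m - Poly_Mapping.single (a, j) 1, c - Poly_Mapping.single (a, j, k) 1), (a,j,k))"
    unfolding we add_index_factor_def using poly_mapping_remove_single[OF cnz] poly_mapping_remove_single[OF mnz] by simp
  then show ?thesis by blast
qed

lemma fourier_dx_eq_fsum_dx_term:
  assumes bounded: "\<forall>m. g m e h \<noteq> 0 \<longrightarrow> (\<forall>x\<in>Poly_Mapping.keys m. snd x \<le> I)"
  shows "fourier (dx g) P e h = fsum (dx_term g e h P)"
proof -
  let ?L = "\<lambda>z y. (case z of (m,c) \<Rightarrow> if distributes m c P then dx_share g e h m c y * distr_weight m c else 0)"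
  have "fourier_term (dx g) P e h = (\<lambda>z. \<Sum>y\<in>lowered_keys (snd z). ?L z y)"
  proof
    fix z :: "umon \<times> distr"
    obtain m c where ze: "z = (m,c)" by (cases z) auto
    show "fourier_term (dx g) P e h z = (\<Sum>y\<in>lowered_keys (snd z). ?L z y)"
      unfolding ze fourier_term_def using dx_eq_sum_dx_share[of m c P g e h]
      by (simp add: sum_distrib_right)
  qed
  then have "fourier (dx g) P e h = fsum (\<lambda>z. \<Sum>y\<in>lowered_keys (snd z). ?L z y)"
    by (simp only: fourier_eq_fsum_fourier_term)
  also have "\<dots> = fsum (\<lambda>(z,y). if y \<in> lowered_keys (snd z) then ?L z y else 0)"
  proof (rule fsum_nested)
    show "finite {z. \<exists>y\<in>lowered_keys (snd z). ?L z y \<noteq> 0}"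
    proof (rule finite_distributions_subset[where I="Suc I"])
      fix m c assume "(m, c) \<in> {z. \<exists>y\<in>lowered_keys (snd z). ?L z y \<noteq> 0}"
      then obtain a j k where nz: "?L (m,c) (a,j,k) \<noteq> 0" by auto
      then have fc: "distributes m c P" by (auto split: if_splits)
      with nz have "g (m - Poly_Mapping.single (a, Suc j) 1 + Poly_Mapping.single (a,j) 1) e h \<noteq> 0"
        unfolding dx_share_def by auto
      with bounded have "\<forall>x\<in>Poly_Mapping.keys m. snd x \<le> Suc I"
        by (intro keys_dx_shift_bound) blast
      with fc show "distributes m c P \<and> (\<forall>x\<in>Poly_Mapping.keys m. snd x \<le> Suc I)" by blast
    qed
  qed (rule finite_lowered_keys)
  also have "\<dots> = fsum (dx_term g e h P)"
    by (rule arg_cong[where f=fsum]) (auto simp: dx_term_def fun_eq_iff)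
  finally show ?thesis .
qed

lemma fsum_weighted_term:
  assumes bounded: "\<forall>m. g m e h \<noteq> 0 \<longrightarrow> (\<forall>x\<in>Poly_Mapping.keys m. snd x \<le> I)"
  shows "fsum (weighted_term g e h P) = \<i> * of_int (momentum P) * fourier g P e h"
proof -
  let ?R = "\<lambda>z y. (case z of (m,c) \<Rightarrow> if distributes m c P then
      (\<i> * of_int (snd (snd y)) * of_nat (Poly_Mapping.lookup c y)) * g m e h * distr_weight m c else 0)"
  have "fsum (weighted_term g e h P) = fsum (\<lambda>(z,y). if y \<in> Poly_Mapping.keys (snd z) then ?R z y else 0)"
    by (rule arg_cong[where f=fsum]) (auto simp: weighted_term_def fun_eq_iff)
  also have "\<dots> = fsum (\<lambda>z. \<Sum>y\<in>Poly_Mapping.keys (snd z). ?R z y)"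
  proof (rule fsum_nested[symmetric])
    show "finite {z. \<exists>y\<in>Poly_Mapping.keys (snd z). ?R z y \<noteq> 0}"
    proof (rule finite_distributions_subset[where I=I])
      fix m c assume "(m, c) \<in> {z. \<exists>y\<in>Poly_Mapping.keys (snd z). ?R z y \<noteq> 0}"
      then have "distributes m c P" "g m e h \<noteq> 0" by (auto split: if_splits)
      with bounded show "distributes m c P \<and> (\<forall>x\<in>Poly_Mapping.keys m. snd x \<le> I)" by blast
    qed
  qed simp
  also have "(\<lambda>z. \<Sum>y\<in>Poly_Mapping.keys (snd z). ?R z y) = (\<lambda>z. \<i> * of_int (momentum P) * fourier_term g P e h z)"
  proof
    fix z :: "umon \<times> distr"
    obtain m c where ze: "z = (m,c)" by (cases z) auto
    show "(\<Sum>y\<in>Poly_Mapping.keys (snd z). ?R z y) = \<i> * of_int (momentum P) * fourier_term g P e h z"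
    proof (cases "distributes m c P")
      case True
      have "(\<Sum>y\<in>Poly_Mapping.keys c. (\<i> * of_int (snd (snd y)) * of_nat (Poly_Mapping.lookup c y)) * g m e h * distr_weight m c)
        = \<i> * (\<Sum>y\<in>Poly_Mapping.keys c. of_int (snd (snd y) * int (Poly_Mapping.lookup c y))) * g m e h * distr_weight m c"
        by (simp add: sum_distrib_left sum_distrib_right mult_ac)
      also have "(\<Sum>y\<in>Poly_Mapping.keys c. of_int (snd (snd y) * int (Poly_Mapping.lookup c y)) :: complex) = of_int (momentum P)"
        by (simp only: distributes_momentum[OF True] of_int_sum)
      finally show ?thesis unfolding ze fourier_term_def using True by (simp add: mult_ac)
    next
      case False then show ?thesis unfolding ze fourier_term_def by simp
    qed
  qed
  finally show ?thesis by (simp only: fsum_cmult fourier_eq_fsum_fourier_term)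
qed

lemma fourier_dx:
  assumes bounded: "\<forall>m. g m e h \<noteq> 0 \<longrightarrow> (\<forall>x\<in>Poly_Mapping.keys m. snd x \<le> I)"
  shows "fourier (dx g) P e h = \<i> * of_int (momentum P) * fourier g P e h"
proof -
  have "fourier (dx g) P e h = fsum (dx_term g e h P)"
    by (rule fourier_dx_eq_fsum_dx_term[where g=g and e=e and h=h, OF bounded])
  also have "\<dots> = fsum (\<lambda>w. dx_term g e h P (add_index_factor_Suc w))"
    by (rule fsum_reindex[symmetric, OF inj_add_index_factor_Suc]) (auto intro: range_add_index_factor_Suc)
  also have "\<dots> = fsum (\<lambda>w. weighted_term g e h P (add_index_factor w))" by (simp only: dx_term_add_index_factor)
  also have "\<dots> = fsum (weighted_term g e h P)"
    by (rule fsum_reindex[OF inj_add_index_factor]) (auto intro: range_add_index_factor)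
  also have "\<dots> = \<i> * of_int (momentum P) * fourier g P e h"
    by (rule fsum_weighted_term[where g=g and e=e and h=h, OF bounded])
  finally show ?thesis .
qed

lemma fourier_cmult: "fourier (\<lambda>m e h. c * g m e h) P e h = c * fourier g P e h"
proof -
  have "fourier_term (\<lambda>m e h. c * g m e h) P e h = (\<lambda>z. c * fourier_term g P e h z)"
    by (rule ext) (auto simp: fourier_term_def)
  then show ?thesis by (simp only: fourier_eq_fsum_fourier_term fsum_cmult)
qed

lemma fourier_sum:
  fixes I :: "nat \<Rightarrow> nat \<Rightarrow> nat"
  assumes v: "\<And>i. qdp_valid N (G i)"
  shows "fourier (\<lambda>m e h. \<Sum>i\<le>I e h. G i m e h) P e h = (\<Sum>i\<le>I e h. fourier (G i) P e h)"
proof -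
  have "fourier_term (\<lambda>m e h. \<Sum>i\<le>I e h. G i m e h) P e h = (\<lambda>z. \<Sum>i\<le>I e h. fourier_term (G i) P e h z)"
    by (rule ext) (auto simp: fourier_term_def sum_distrib_right)
  moreover have "\<forall>i\<in>{..I e h}. finite {z. fourier_term (G i) P e h z \<noteq> 0}"
  proof
    fix i show "finite {z. fourier_term (G i) P e h z \<noteq> 0}" by (rule finite_fourier_term_support[where f="G i" and e=e and h=h, OF jet_bound_all[OF v[of i]]])
  qed
  ultimately show ?thesis by (simp only: fourier_eq_fsum_fourier_term fsum_sum[OF finite_atMost])
qed

lemma fourier_dx_power:
  assumes v: "qdp_valid N g"
  shows "fourier ((dx ^^ i) g) P e h = (\<i> * of_int (momentum P)) ^ i * fourier g P e h"
proof (induction i)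
  case 0 then show ?case by simp
next
  case (Suc i)
  have "fourier ((dx ^^ Suc i) g) P e h = fourier (dx ((dx ^^ i) g)) P e h" by simp
  also have "\<dots> = (\<i> * of_int (momentum P)) * fourier ((dx ^^ i) g) P e h"
    by (rule fourier_dx[where g="(dx ^^ i) g" and e=e and h=h, OF jet_bound_all[OF qdp_valid_dx_power[OF v]]])
  also have "\<dots> = (\<i> * of_int (momentum P)) ^ Suc i * fourier g P e h" using Suc.IH by simp
  finally show ?case .
qed

lemma fourier_vard:
  assumes v: "qdp_valid N f"
  shows "fourier (vard mu f) P e h =
     of_nat (Poly_Mapping.lookup P (mu, - momentum P) + 1) * fourier f (P + Poly_Mapping.single (mu, - momentum P) 1) e h"
proof -
  let ?l = "- momentum P"
  have "fourier (vard mu f) P e h = (\<Sum>i\<le>jet_bound f e h. fourier (\<lambda>m e h. (-1) ^ i * (dx ^^ i) (du mu i f) m e h) P e h)"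
    unfolding vard_eq_sum_jet_bound_fun[OF v]
    by (rule fourier_sum, rule qdp_valid_cmult, rule qdp_valid_dx_power, rule qdp_valid_du[OF v])
  also have "\<dots> = (\<Sum>i\<le>jet_bound f e h. (\<i> * of_int ?l) ^ i * fourier (du mu i f) P e h)"
  proof (rule sum.cong[OF refl])
    fix i
    have "fourier (\<lambda>m e h. (-1) ^ i * (dx ^^ i) (du mu i f) m e h) P e h = (-1) ^ i * ((\<i> * of_int (momentum P)) ^ i * fourier (du mu i f) P e h)"
      by (simp only: fourier_cmult fourier_dx_power[OF qdp_valid_du[OF v]])
    also have "\<dots> = (\<i> * of_int ?l) ^ i * fourier (du mu i f) P e h"
      by (simp add: power_mult_distrib[symmetric])
    finally show "fourier (\<lambda>m e h. (-1) ^ i * (dx ^^ i) (du mu i f) m e h) P e h = (\<i> * of_int ?l) ^ i * fourier (du mu i f) P e h" .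
  qed
  also have "\<dots> = of_nat (Poly_Mapping.lookup P (mu, ?l) + 1) * fourier f (P + Poly_Mapping.single (mu, ?l) 1) e h"
    by (rule fourier_add_single[where f=f and e=e and h=h, symmetric, OF jet_bound_all[OF v]])
  finally show ?thesis .
qed

section \<open>Local functionals\<close>

lemma dx_add: "dx (\<lambda>m e h. f m e h + g m e h) m e h = dx f m e h + dx g m e h"
  unfolding dx_def by (simp add: distrib_left sum.distrib)

lemma dx_sum:
  fixes I :: "nat \<Rightarrow> nat \<Rightarrow> nat"
  shows "dx (\<lambda>m e h. \<Sum>j\<le>I e h. G j m e h) m e h = (\<Sum>j\<le>I e h. dx (G j) m e h)"
  unfolding dx_def by (simp add: sum_distrib_left sum.swap[of _ "{..I e h}"])

lemma lf_eq_trans: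
  assumes "lf_eq N f g" "lf_eq N g k"
  shows "lf_eq N f k"
proof -
  obtain k1 c1 where 1: "qdp_valid N k1" "\<forall>m e h. m \<noteq> 0 \<longrightarrow> c1 m e h = 0" "\<forall>m e h. f m e h - g m e h = dx k1 m e h + c1 m e h"
    using assms(1) unfolding lf_eq_def by blast
  obtain k2 c2 where 2: "qdp_valid N k2" "\<forall>m e h. m \<noteq> 0 \<longrightarrow> c2 m e h = 0" "\<forall>m e h. g m e h - k m e h = dx k2 m e h + c2 m e h"
    using assms(2) unfolding lf_eq_def by blast
  show ?thesis unfolding lf_eq_def
  proof (intro exI conjI)
    show "qdp_valid N (\<lambda>m e h. k1 m e h + k2 m e h)" by (rule qdp_valid_add[OF 1(1) 2(1)])
    show "\<forall>m e h. m \<noteq> 0 \<longrightarrow> c1 m e h + c2 m e h = 0" using 1(2) 2(2) by simp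
    show "\<forall>m e h. f m e h - k m e h = dx (\<lambda>m e h. k1 m e h + k2 m e h) m e h + (c1 m e h + c2 m e h)"
    proof (intro allI)
      fix m e h
      have "f m e h - k m e h = (f m e h - g m e h) + (g m e h - k m e h)" by simp
      also have "\<dots> = dx k1 m e h + c1 m e h + (dx k2 m e h + c2 m e h)" using 1(3) 2(3) by simp
      finally show "f m e h - k m e h = dx (\<lambda>m e h. k1 m e h + k2 m e h) m e h + (c1 m e h + c2 m e h)"
        by (simp add: dx_add)
    qed
  qed
qed

lemma lf_eq_vard_du:
  assumes v: "qdp_valid N f"
  shows "lf_eq N (vard mu f) (du mu 0 f)"
proof -
  let ?t = "\<lambda>i m e h. (-1) ^ i * (dx ^^ i) (du mu i f) m e h :: complex"
  let ?K = "\<lambda>m e h. \<Sum>j\<le>jet_bound f e h. (-1) ^ Suc j * (dx ^^ j) (du mu (Suc j) f) m e h :: complex"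
  have Kv: "qdp_valid N ?K"
    by (rule qdp_valid_sum, rule qdp_valid_cmult, rule qdp_valid_dx_power, rule qdp_valid_du[OF v])
  have eq: "vard mu f m e h - du mu 0 f m e h = dx ?K m e h + 0" for m e h
  proof -
    have "dx ?K m e h = (\<Sum>j\<le>jet_bound f e h. dx (\<lambda>m e h. (-1) ^ Suc j * (dx ^^ j) (du mu (Suc j) f) m e h) m e h)"
      by (rule dx_sum)
    also have "\<dots> = (\<Sum>j\<le>jet_bound f e h. ?t (Suc j) m e h)"
      by (rule sum.cong[OF refl]) (simp add: dx_def sum_distrib_left mult_ac)
    also have "\<dots> = (\<Sum>j<jet_bound f e h. ?t (Suc j) m e h)"
    proof -
      have "\<forall>m. du mu (Suc (jet_bound f e h)) f m e h = 0"
        using du_beyond_jet_bound[OF v, where i="Suc (jet_bound f e h)" and e=e and h=h] by simp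
      then have "?t (Suc (jet_bound f e h)) m e h = 0"
        using dx_power_zero[of "du mu (Suc (jet_bound f e h)) f" e h "Suc (jet_bound f e h)" m] by simp
      then show ?thesis by (simp add: lessThan_Suc_atMost[symmetric])
    qed
    also have "\<dots> = vard mu f m e h - du mu 0 f m e h"
      unfolding vard_eq_sum_jet_bound[OF v] by (simp add: sum.atMost_shift)
    finally show ?thesis by simp
  qed
  show ?thesis unfolding lf_eq_def
    by (intro exI[of _ ?K] exI[of _ "\<lambda>m e h. 0"] conjI Kv) (use eq in auto)
qed

lemma lf_eq_vard_of_lf_eq_du:
  assumes "qdp_valid N f" "lf_eq N (du mu 0 f) g"
  shows "lf_eq N (vard mu f) g"
  using lf_eq_trans[OF lf_eq_vard_du[OF assms(1)] assms(2)] .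

section \<open>The tau-structure\<close>

lemma has_momentum_zero_mode: "has_momentum 0 (zero_mode A)"
  unfolding has_momentum_def zero_mode_def by auto

lemma fourier_vard_pdiff_zero_mode:
  assumes v: "qdp_valid N f" and mq: "momentum Q = momentum P"
  shows "fourier (vard mu f) Q e h = pdiff (mu, - momentum P) (zero_mode (fourier f)) Q e h"
proof -
  have m0: "momentum (Q + Poly_Mapping.single (mu, - momentum P) 1) = 0"
    using mq by (simp only: momentum_add momentum_single snd_conv)
  show ?thesis
    unfolding fourier_vard[OF v] pdiff_def zero_mode_def mq using m0 by simp
qed

lemma qcomm_vard_swap:
  assumes v1: "qdp_valid N f1" and v2: "qdp_valid N f2"
    and comm: "qcomm N etainv (zero_mode (fourier f1)) (zero_mode (fourier f2)) = (\<lambda>P e h. 0)"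
  shows "qcomm N etainv (fourier (vard mu f1)) (zero_mode (fourier f2)) =
         qcomm N etainv (fourier (vard mu f2)) (zero_mode (fourier f1))"
proof (intro ext)
  fix P e h
  let ?Z1 = "zero_mode (fourier f1)"
  let ?Z2 = "zero_mode (fourier f2)"
  let ?y = "(mu, - momentum P)"
  have Z1: "has_momentum 0 ?Z1" and Z2: "has_momentum 0 ?Z2" by (rule has_momentum_zero_mode)+
  have d1: "\<forall>Q e h. momentum Q = momentum P \<longrightarrow> fourier (vard mu f1) Q e h = pdiff ?y ?Z1 Q e h"
    using fourier_vard_pdiff_zero_mode[OF v1] by blast
  have d2: "\<forall>Q e h. momentum Q = momentum P \<longrightarrow> fourier (vard mu f2) Q e h = pdiff ?y ?Z2 Q e h"
    using fourier_vard_pdiff_zero_mode[OF v2] by blast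
  have "star N etainv ?Z1 ?Z2 = star N etainv ?Z2 ?Z1"
    using comm by (simp add: qcomm_def fun_eq_iff)
  then have "pdiff ?y (star N etainv ?Z1 ?Z2) P e h = pdiff ?y (star N etainv ?Z2 ?Z1) P e h"
    by simp
  then have "star N etainv (pdiff ?y ?Z1) ?Z2 P e h + star N etainv ?Z1 (pdiff ?y ?Z2) P e h =
             star N etainv (pdiff ?y ?Z2) ?Z1 P e h + star N etainv ?Z2 (pdiff ?y ?Z1) P e h"
    by (simp only: pdiff_star[OF Z1] pdiff_star[OF Z2])
  then show "qcomm N etainv (fourier (vard mu f1)) ?Z2 P e h = qcomm N etainv (fourier (vard mu f2)) ?Z1 P e h"
    unfolding qcomm_def star_cong_left[OF Z2 d1] star_cong_right[OF Z2 d1]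
      star_cong_left[OF Z1 d2] star_cong_right[OF Z1 d2]
    by (simp add: algebra_simps)
qed

theorem proposition4p2:
  fixes N :: nat
    and eta etainv :: "nat \<Rightarrow> nat \<Rightarrow> complex"
    and hb :: "nat \<Rightarrow> nat \<Rightarrow> qdp"
  assumes N1: "1 \<le> N"
    and eta_sym: "\<forall>a\<in>{1..N}. \<forall>b\<in>{1..N}. eta a b = eta b a"
    and eta_inv: "\<forall>a\<in>{1..N}. \<forall>b\<in>{1..N}.
                    (\<Sum>mu\<in>{1..N}. eta a mu * etainv mu b) = (if a = b then 1 else 0)"
    and hb_valid: "\<forall>b\<in>{1..N}. \<forall>q. qdp_valid N (hb b q) \<and> deg_le0 (hb b q)"
    and hb_comm: "\<forall>b\<in>{1..N}. \<forall>g\<in>{1..N}. \<forall>q p.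
                    qcomm N etainv (zero_mode (fourier (hb b q))) (zero_mode (fourier (hb g p))) =
                    (\<lambda>P e h. 0)"
    and hb_10: "lf_eq N (hb 1 0) (quad_dens N eta)"
    and string_pos: "\<forall>b\<in>{1..N}. \<forall>q\<ge>1. lf_eq N (du 1 0 (hb b q)) (hb b (q - 1))"
    and string_0: "\<forall>b\<in>{1..N}. lf_eq N (du 1 0 (hb b 0)) (lin_dens N eta b)"
  shows "tau_structure N eta etainv hb (\<lambda>b q. vard 1 (hb b (nat (q + 1))))"
proof -
  have valid: "qdp_valid N (hb b q)" if "b \<in> {1..N}" for b q
    using hb_valid that by blast
  show ?thesis
    unfolding tau_structure_def
  proof (intro conjI ballI allI impI)
    fix b :: nat and q :: int assume "b \<in> {1..N}"
    then show "qdp_valid N (vard 1 (hb b (nat (q + 1))))" "deg_le0 (vard 1 (hb b (nat (q + 1))))"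
      using hb_valid qdp_valid_vard deg_le0_vard by blast+
  next
    fix b :: nat assume "b \<in> {1..N}"
    then show "lf_eq N (vard 1 (hb b (nat (- 1 + 1)))) (lin_dens N eta b)"
      using lf_eq_vard_of_lf_eq_du valid string_0 by simp
  next
    fix b q :: nat assume b: "b \<in> {1..N}"
    have "nat (int q + 1) = Suc q" by arith
    with b show "lf_eq N (vard 1 (hb b (nat (int q + 1)))) (hb b q)"
      using lf_eq_vard_of_lf_eq_du[OF valid] string_pos[rule_format, OF b, of "Suc q"] by simp
  next
    fix a b p q :: nat assume "a \<in> {1..N}" "b \<in> {1..N}"
    then show "qcomm N etainv (fourier (vard 1 (hb a (nat (int p - 1 + 1))))) (zero_mode (fourier (hb b q))) =
               qcomm N etainv (fourier (vard 1 (hb b (nat (int q - 1 + 1))))) (zero_mode (fourier (hb a p)))"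
      using qcomm_vard_swap valid hb_comm by simp
  qed
qed

end
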